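(* In the setting of the context, define for $\lambda\in Y$, $t\in\mathbb R$: $\hat P(t,\lambda)=\hat T(t,0,\lambda)S(0,\lambda)P(0)S(0,\lambda)^{-1}\hat T(0,t,\lambda)$ and $\hat Q(t,\lambda)=\hat T(t,0,\lambda)S(0,\lambda)Q(0)S(0,\lambda)^{-1}\hat T(0,t,\lambda)$, where $S(0,\lambda)=U^\lambda(0,0)+V^\lambda(0,0)$ (which is invertible) and $\hat T(t,s,\lambda)$ is the evolution operator of $x'=(A(t)+B(t,\lambda))x$. Then $\hat P(t,\lambda),\hat Q(t,\lambda)$ are complementary projections with $\hat P(t,\lambda)\hat T(t,s,\lambda)=\hat T(t,s,\lambda)\hat P(s,\lambda)$, and with $\hat K=K/(1-KcN)$: (1) $\|\hat T(t,s,\lambda)\hat P(s,\lambda)\|\le\hat K(h(t)/h(s))^a\mu(|s|)^\varepsilon\|\hat P(s,\lambda)\|$ for $t\ge s$, and $\|\hat T(t,s,\lambda)\hat Q(s,\lambda)\|\le\hat K(k(s)/k(t))^{-b}\nu(|s|)^\varepsilon\|\hat Q(s,\lambda)\|$ for $t\le s$; (2) $\|\hat P(t,\lambda)\|\le\frac{K}{1-2K\hat KcN}(\mu(|t|)^\varepsilon+\nu(|t|)^\varepsilon)$ and $\|\hat Q(t,\lambda)\|\le\frac{K}{1-2K\hat KcN}(\mu(|t|)^\varepsilon+\nu(|t|)^\varepsilon)$.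
   Context: Setting: $X$ Banach space, $Y$ open subset of a Banach space with norm $|\cdot|$; $A(t)\in\mathcal B(X)$ continuous with evolution operator $T(t,s)$; $x'=A(t)x$ admits a nonuniform $(h,k,\mu,\nu)$-dichotomy on $\mathbb R$: projections $P(t)$ with $P(t)T(t,s)=T(t,s)P(s)$, $Q=\mathrm{Id}-P$, constants $a<0\le b$, $\varepsilon\ge0$, $K>0$ with $\|T(t,s)P(s)\|\le K(h(t)/h(s))^a\mu(|s|)^\varepsilon$ ($t\ge s$), $\|T(t,s)Q(s)\|\le K(k(s)/k(t))^{-b}\nu(|s|)^\varepsilon$ ($s\ge t$), where $h,k,\mu,\nu$ are growth rates (increasing $u:\mathbb R\to(0,\infty)$, $u(0)=1$, $u(+\infty)=\infty$, $u(-\infty)=0$), with $\lim_{t\to\infty}k(t)^{-b}\nu(|t|)^\varepsilon=0$, $\lim_{t\to-\infty}h(t)^{-a}\mu(|t|)^\varepsilon=0$. $B:\mathbb R\times Y\to\mathcal B(X)$ with $\|B(t,\lambda)\|\le c\min\{\mu(|t|)^{-\omega-\varepsilon},\nu(|t|)^{-\omega-\varepsilon}\}$ and $\|B(t,\lambda_1)-B(t,\lambda_2)\|\le c|\lambda_1-\lambda_2|\min\{\mu(|t|)^{-\omega-\varepsilon},\nu(|t|)^{-\omega-\varepsilon}\}$, $c,\omega>0$; $\nu(|t|)^\varepsilon\int_{-\infty}^t\mu(|\tau|)^{-\omega}d\tau+\mu(|t|)^\varepsilon\int_t^\infty\nu(|\tau|)^{-\omega}d\tau\le N$ for all $t$;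 and $c<[KN(2K+1)]^{-1}$. $\Omega_1$ ($s$ fixed): continuous families $U(t,s)_{t\ge s}\subset\mathcal B(X)$ with $\|U\|_1=\sup_{t\ge s}\|U(t,s)\|(h(t)/h(s))^{-a}\mu(|s|)^{-\varepsilon}<\infty$; $\Omega_2$: continuous families $V(t,s)_{t\le s}$ with $\|V\|_2=\sup_{t\le s}\|V(t,s)\|(k(s)/k(t))^{b}\nu(|s|)^{-\varepsilon}<\infty$. $U^\lambda\in\Omega_1$ is the unique element with $U^\lambda(t,s)=T(t,s)P(s)+\int_s^tT(t,\tau)P(\tau)B(\tau,\lambda)U^\lambda(\tau,s)d\tau-\int_t^\infty T(t,\tau)Q(\tau)B(\tau,\lambda)U^\lambda(\tau,s)d\tau$ ($t\ge s$); $V^\lambda\in\Omega_2$ the unique element with $V^\lambda(t,s)=T(t,s)Q(s)+\int_{-\infty}^tT(t,\tau)P(\tau)B(\tau,\lambda)V^\lambda(\tau,s)d\tau-\int_t^sT(t,\tau)Q(\tau)B(\tau,\lambda)V^\lambda(\tau,s)d\tau$ ($t\le s$). *)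

theory Defs
  imports "HOL-Analysis.Analysis"
begin

definition growth_rate :: "(real \<Rightarrow> real) \<Rightarrow> bool" where
  "growth_rate u \<longleftrightarrow> (\<forall>t. u t > 0) \<and> mono u \<and> u 0 = 1 \<and>
     filterlim u at_top at_top \<and> (u \<longlongrightarrow> 0) at_bot"

definition evolution_operator ::
  "(real \<Rightarrow> 'a::banach \<Rightarrow>\<^sub>L 'a) \<Rightarrow> (real \<Rightarrow> real \<Rightarrow> 'a \<Rightarrow>\<^sub>L 'a) \<Rightarrow> bool" where
  "evolution_operator A T \<longleftrightarrow> (\<forall>s. T s s = id_blinfun) \<and>
     (\<forall>t s. ((\<lambda>t. T t s) has_vector_derivative (A t o\<^sub>L T t s)) (at t))"

end

theory Submission
  imports Defs
begin

text \<open>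
  \<open>U\<close> and \<open>V\<close>, the solutions of the two integral equations in the weighted spaces \<open>\<Omega>\<^sub>1\<close> and
  \<open>\<Omega>\<^sub>2\<close>, are the stable and unstable parts of the perturbed evolution \<open>That\<close>. Variation of
  constants and a Volterra argument give \<open>U t s = That t s o U s s\<close>, and the contraction that
  makes the solution unique also bounds \<open>U t s\<close> by \<open>K / (1 - K c N)\<close> times the weight of \<open>\<Omega>\<^sub>1\<close>.
  A solution lying in \<open>\<Omega>\<^sub>1\<close> has no \<open>Q\<close>-component initially, because the dichotomy would pull
  such a component back to zero; hence \<open>U s s\<close> fixes \<open>That s r o U r r\<close>, i.e. the range of \<open>U\<close>
  is invariant under \<open>That\<close>. Finally \<open>U t t + V t t\<close> is within \<open>\<delta> = K K_hat c N < 1/2\<close> of the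
  identity, so \<open>S = U 0 0 + V 0 0\<close> is invertible by a Neumann series, and transporting \<open>P 0\<close>,
  conjugated by \<open>S\<close>, along \<open>That\<close> gives projections whose norms are controlled by those of
  \<open>U t t\<close> and \<open>V t t\<close>. Every statement about \<open>V\<close> is the time reversal of one about \<open>U\<close>.
\<close>

lemma blinfun_compose_assoc: "(f o\<^sub>L g) o\<^sub>L h = f o\<^sub>L (g o\<^sub>L h)"
  by (rule blinfun_eqI) simp

lemma blinfun_compose_id [simp]: "id_blinfun o\<^sub>L f = f" "f o\<^sub>L id_blinfun = f"
  by (auto intro: blinfun_eqI)

lemmas blinfun_compose_distrib =
  bounded_bilinear.add_left[OF bounded_bilinear_blinfun_compose]
  bounded_bilinear.add_right[OF bounded_bilinear_blinfun_compose]
  bounded_bilinear.diff_left[OF bounded_bilinear_blinfun_compose]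
  bounded_bilinear.diff_right[OF bounded_bilinear_blinfun_compose]
  bounded_bilinear.minus_left[OF bounded_bilinear_blinfun_compose]
  bounded_bilinear.minus_right[OF bounded_bilinear_blinfun_compose]

lemma norm_blinfun_compose3: "norm (f o\<^sub>L g o\<^sub>L h) \<le> norm f * norm g * norm h"
  by (meson norm_blinfun_compose order_trans mult_right_mono norm_ge_zero)

lemma has_integral_blinfun_compose_left:
  "(f has_integral I) S \<Longrightarrow> ((\<lambda>x. c o\<^sub>L f x) has_integral (c o\<^sub>L I)) S"
  using has_integral_linear[OF _ bounded_bilinear.bounded_linear_right[OF bounded_bilinear_blinfun_compose]]
  by (simp add: o_def)

lemma has_integral_blinfun_compose_right:
  "(f has_integral I) S \<Longrightarrow> ((\<lambda>x. f x o\<^sub>L c) has_integral (I o\<^sub>L c)) S"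
  using has_integral_linear[OF _ bounded_bilinear.bounded_linear_left[OF bounded_bilinear_blinfun_compose]]
  by (simp add: o_def)

lemma blinfun_inverse_of_neumann_series:
  fixes E :: "'a::banach \<Rightarrow>\<^sub>L 'a"
  assumes "norm E < 1"
  shows "\<exists>S. (id_blinfun - E) o\<^sub>L S = id_blinfun \<and> S o\<^sub>L (id_blinfun - E) = id_blinfun"
proof -
  define pw where "pw n = ((\<lambda>X. E o\<^sub>L X) ^^ n) id_blinfun" for n
  have pw_Suc: "pw (Suc n) = E o\<^sub>L pw n" for n
    by (simp add: pw_def)
  have pw_Suc': "pw (Suc n) = pw n o\<^sub>L E" for n
  proof (induction n)
    case (Suc n)
    then show ?case by (metis pw_Suc blinfun_compose_assoc)
  qed (simp add: pw_def)
  have "norm (pw n) \<le> norm E ^ n" for n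
  proof (induction n)
    case (Suc n)
    have "norm (pw (Suc n)) \<le> norm E * norm (pw n)"
      unfolding pw_Suc by (rule norm_blinfun_compose)
    also have "\<dots> \<le> norm E * norm E ^ n"
      using Suc by (intro mult_left_mono) auto
    finally show ?case by simp
  qed (simp add: pw_def norm_blinfun_id_le)
  then have "summable (\<lambda>n. norm (pw n))"
    using assms by (intro summable_comparison_test[OF _ summable_geometric[of "norm E"]]) auto
  then have pw_summable: "summable pw"
    by (rule summable_norm_cancel)
  define S where "S = suminf pw"
  have tail: "(\<Sum>n. pw (Suc n)) = S - id_blinfun"
    using suminf_split_head[OF pw_summable] by (simp add: S_def pw_def)
  have "E o\<^sub>L S = S - id_blinfun"
    using bounded_linear.suminf[OF bounded_bilinear.bounded_linear_right[OF bounded_bilinear_blinfun_compose] pw_summable, of E]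
    by (simp add: S_def[symmetric] pw_Suc[symmetric] tail)
  moreover have "S o\<^sub>L E = S - id_blinfun"
    using bounded_linear.suminf[OF bounded_bilinear.bounded_linear_left[OF bounded_bilinear_blinfun_compose] pw_summable, of E]
    by (simp add: S_def[symmetric] pw_Suc'[symmetric] tail)
  ultimately show ?thesis
    by (intro exI[of _ S]) (simp add: blinfun_compose_distrib)
qed

lemma has_integral_reflect_image_imp:
  fixes f :: "'n::euclidean_space \<Rightarrow> 'a::banach"
  assumes "(f has_integral i) S"
  shows "((\<lambda>x. f (- x)) has_integral i) (uminus ` S)"
proof -
  define g where "g x = (if x \<in> S then f x else 0)" for x
  have restrict: "(\<lambda>x. if x \<in> uminus ` S then f (- x) else 0) = (\<lambda>x. g (- x))"
    by (force simp: g_def)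
  have ball_reflect: "ball 0 B \<subseteq> cbox (- b) (- a)" if "ball 0 B \<subseteq> cbox a b" for B :: real and a b :: 'n
  proof
    fix x :: 'n
    assume "x \<in> ball 0 B"
    then have "- x \<in> cbox a b" using that by (auto simp: dist_norm)
    then have "- (- x) \<in> uminus ` cbox a b" by blast
    then show "x \<in> cbox (- b) (- a)" by (simp add: uminus_interval_vector)
  qed
  from assms have g_integrable: "\<And>a b. g integrable_on cbox a b"
    and g_limit: "\<And>e. e > 0 \<Longrightarrow> \<exists>B>0. \<forall>a b. ball 0 B \<subseteq> cbox a b \<longrightarrow> norm (integral (cbox a b) g - i) < e"
    unfolding has_integral_alt'[of f] g_def by auto
  have "(\<lambda>x. g (- x)) integrable_on cbox a b" for a b
    using g_integrable[of "- b" "- a"] integrable_reflect[where f = g and a = "- b" and b = "- a"] by simp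
  moreover have "\<exists>B>0. \<forall>a b. ball 0 B \<subseteq> cbox a b \<longrightarrow> norm (integral (cbox a b) (\<lambda>x. g (- x)) - i) < e"
    if e: "e > 0" for e
  proof -
    obtain B where "B > 0" and B: "\<And>a b. ball 0 B \<subseteq> cbox a b \<Longrightarrow> norm (integral (cbox a b) g - i) < e"
      using g_limit[OF e] by blast
    show ?thesis
    proof (intro exI conjI allI impI)
      fix a b :: 'n
      assume "ball 0 B \<subseteq> cbox a b"
      then have "norm (integral (cbox (- b) (- a)) g - i) < e"
        by (intro B ball_reflect)
      then show "norm (integral (cbox a b) (\<lambda>x. g (- x)) - i) < e"
        using integral_reflect[where f = g and a = "- b" and b = "- a"] by simp
    qed (rule \<open>B > 0\<close>)
  qed
  ultimately show ?thesis
    unfolding has_integral_alt'[of _ _ "uminus ` S"] restrict by blast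
qed

lemma has_integral_reflect_image:
  fixes f :: "'n::euclidean_space \<Rightarrow> 'a::banach"
  shows "((\<lambda>x. f (- x)) has_integral i) (uminus ` S) \<longleftrightarrow> (f has_integral i) S"
  using has_integral_reflect_image_imp[of f i S]
    has_integral_reflect_image_imp[of "\<lambda>x. f (- x)" i "uminus ` S"]
  by (auto simp: image_image)

lemma has_integral_atLeast_Un:
  fixes f :: "real \<Rightarrow> 'a::banach"
  assumes "(f has_integral I) {s..t}" "(f has_integral J) {t..}" "s \<le> t"
  shows "(f has_integral I + J) {s..}"
proof -
  have "{s..t} \<inter> {t..} = {t}" "{s..t} \<union> {t..} = {s..}"
    using \<open>s \<le> t\<close> by auto
  then show ?thesis
    using has_integral_Un[OF assms(1,2)] by simp
qed

lemma has_integral_atLeast_diff: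
  fixes f :: "real \<Rightarrow> 'a::banach"
  assumes I: "(f has_integral I) {s..}" and J: "(f has_integral J) {t..}" and "s \<le> t"
  shows "(f has_integral I - J) {s..t}"
proof -
  obtain I' where I': "(f has_integral I') {s..t}"
    using integrable_on_subinterval[OF has_integral_integrable[OF I], of s t] by (auto simp: integrable_on_def)
  then have "I' = I - J"
    using has_integral_unique[OF has_integral_atLeast_Un[OF I' J \<open>s \<le> t\<close>] I] by (simp add: algebra_simps)
  with I' show ?thesis
    by simp
qed

lemma has_integral_atLeast_tail:
  fixes f :: "real \<Rightarrow> 'a::banach"
  assumes I: "(f has_integral I) {s..}" and J: "(f has_integral J) {s..t}" and "s \<le> t"
  shows "(f has_integral I - J) {t..}"
proof -
  have "((\<lambda>x. (if x \<in> {s..} then f x else 0) - (if x \<in> {s..t} then f x else 0)) has_integral I - J) UNIV"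
    using has_integral_diff[OF has_integral_restrict_UNIV[THEN iffD2, OF I]
        has_integral_restrict_UNIV[THEN iffD2, OF J]] .
  moreover have "(\<lambda>x. (if x \<in> {s..} then f x else 0) - (if x \<in> {s..t} then f x else 0))
      = (\<lambda>x. if x \<in> {t<..} then f x else 0)"
    using \<open>s \<le> t\<close> by (auto simp: fun_eq_iff)
  ultimately have "((\<lambda>x. if x \<in> {t<..} then f x else 0) has_integral I - J) UNIV"
    by simp
  then have "(f has_integral I - J) {t<..}"
    by (simp only: has_integral_restrict_UNIV)
  moreover have "negligible {x \<in> {t..} - {t<..}. f x \<noteq> 0}"
    by (rule negligible_subset[of "{t}"]) auto
  moreover have "{x \<in> {t<..} - {t..}. f x \<noteq> 0} = {}"
    by auto
  ultimately show ?thesis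
    using has_integral_spike_set_eq[where f = f and S = "{t<..}" and T = "{t..}" and y = "I - J"]
    by (metis negligible_empty)
qed

lemma integral_reflect_abs:
  fixes f :: "real \<Rightarrow> real"
  assumes "(\<lambda>x. f \<bar>x\<bar>) integrable_on S"
  shows "(\<lambda>x. f \<bar>x\<bar>) integrable_on (uminus ` S)"
    and "integral (uminus ` S) (\<lambda>x. f \<bar>x\<bar>) = integral S (\<lambda>x. f \<bar>x\<bar>)"
  using has_integral_reflect_image[of "\<lambda>x. f \<bar>x\<bar>" "integral S (\<lambda>x. f \<bar>x\<bar>)" S]
    integrable_integral[OF assms]
  by (auto simp: integrable_on_def intro: integral_unique)

section \<open>Gronwall's lemma and linear differential equations\<close>

lemma gronwall_zero:
  fixes \<phi> :: "real \<Rightarrow> real"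
  assumes cont: "continuous_on {s..t} \<phi>" and nonneg: "\<And>\<tau>. \<tau> \<in> {s..t} \<Longrightarrow> 0 \<le> \<phi> \<tau>"
    and le: "\<And>\<tau>. \<tau> \<in> {s..t} \<Longrightarrow> \<phi> \<tau> \<le> C * integral {s..\<tau>} \<phi>" and "0 \<le> C" and "s \<le> t"
  shows "\<phi> t = 0"
proof -
  define \<Phi> where "\<Phi> x = integral {s..x} \<phi>" for x
  define \<Psi> where "\<Psi> x = exp (- C * x) * \<Phi> x" for x
  have \<phi>_integrable: "\<phi> integrable_on {s..t}"
    using cont integrable_continuous_real by blast
  have \<Phi>_nonneg: "0 \<le> \<Phi> t"
    unfolding \<Phi>_def using nonneg by (intro integral_nonneg \<phi>_integrable) auto
  have \<Phi>_deriv: "(\<Phi> has_real_derivative \<phi> x) (at x)" if "s < x" "x < t" for x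
  proof -
    have "(\<Phi> has_vector_derivative \<phi> x) (at x within {s..t})"
      unfolding \<Phi>_def using that by (intro integral_has_vector_derivative cont) auto
    then show ?thesis
      using that by (simp add: at_within_Icc_at has_real_derivative_iff_has_vector_derivative)
  qed
  \<comment> \<open>the integrating factor \<open>exp (- C x)\<close> turns \<open>\<Phi>' \<le> C \<Phi>\<close> into \<open>\<Psi>' \<le> 0\<close>\<close>
  have "\<Psi> t \<le> \<Psi> s"
  proof (rule DERIV_nonpos_imp_decreasing_open[OF \<open>s \<le> t\<close>])
    show "continuous_on {s..t} \<Psi>"
      unfolding \<Psi>_def \<Phi>_def by (intro continuous_intros indefinite_integral_continuous_1 \<phi>_integrable)
    fix x assume x: "s < x" "x < t"
    have "\<phi> x \<le> C * \<Phi> x"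
      unfolding \<Phi>_def using le[of x] x by auto
    then have "- C * exp (- C * x) * \<Phi> x + exp (- C * x) * \<phi> x \<le> 0"
      by (simp add: algebra_simps)
    moreover have "(\<Psi> has_real_derivative - C * exp (- C * x) * \<Phi> x + exp (- C * x) * \<phi> x) (at x)"
      unfolding \<Psi>_def using x by (auto intro!: derivative_eq_intros \<Phi>_deriv)
    ultimately show "\<exists>y. (\<Psi> has_real_derivative y) (at x) \<and> y \<le> 0"
      by blast
  qed
  then have "\<Phi> t = 0"
    using \<Phi>_nonneg by (simp add: \<Psi>_def \<Phi>_def mult_le_0_iff)
  then show ?thesis
    using le[of t] nonneg[of t] \<open>s \<le> t\<close> by (simp add: \<Phi>_def)
qed

lemma linear_ode_zero_forward:
  fixes d :: "real \<Rightarrow> 'a::banach"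
  assumes der: "\<And>\<tau>. (d has_vector_derivative d' \<tau>) (at \<tau>)"
    and bound: "\<And>\<tau>. \<tau> \<in> {r..t} \<Longrightarrow> norm (d' \<tau>) \<le> C * norm (d \<tau>)"
    and "0 \<le> C" "d r = 0" "r \<le> t"
  shows "d t = 0"
proof -
  have cont: "continuous_on S d" for S
    using der by (meson continuous_at_imp_continuous_on has_vector_derivative_continuous)
  have "norm (d t) = 0"
  proof (rule gronwall_zero[where \<phi> = "\<lambda>x. norm (d x)" and C = C])
    show "continuous_on {r..t} (\<lambda>x. norm (d x))"
      by (intro continuous_intros cont)
    fix \<tau> assume \<tau>: "\<tau> \<in> {r..t}"
    have d_integral: "(d' has_integral (d \<tau> - d r)) {r..\<tau>}"
      using \<tau> by (intro fundamental_theorem_of_calculus) (auto intro: has_vector_derivative_at_within der)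
    have bound_integrable: "(\<lambda>x. C * norm (d x)) integrable_on {r..\<tau>}"
      by (intro integrable_continuous_real continuous_intros cont)
    have "norm (integral {r..\<tau>} d') \<le> integral {r..\<tau>} (\<lambda>x. C * norm (d x))"
      by (rule integral_norm_bound_integral[OF _ bound_integrable])
        (use d_integral \<tau> in \<open>auto intro!: bound simp: integrable_on_def\<close>)
    then show "norm (d \<tau>) \<le> C * integral {r..\<tau>} (\<lambda>x. norm (d x))"
      using integral_unique[OF d_integral] \<open>d r = 0\<close> by simp
  qed (use \<open>0 \<le> C\<close> \<open>r \<le> t\<close> in auto)
  then show ?thesis by simp
qed

lemma linear_ode_zero:
  fixes d :: "real \<Rightarrow> 'a::banach"
  assumes der: "\<And>\<tau>. (d has_vector_derivative d' \<tau>) (at \<tau>)"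
    and bound: "\<And>\<tau>. \<tau> \<in> {min r t..max r t} \<Longrightarrow> norm (d' \<tau>) \<le> C * norm (d \<tau>)"
    and "0 \<le> C" "d r = 0"
  shows "d t = 0"
proof (cases "r \<le> t")
  case True
  then show ?thesis
    using assms by (intro linear_ode_zero_forward[where d' = d' and C = C]) auto
next
  case False
  have "(\<lambda>x. d (- x)) (- t) = 0"
  proof (rule linear_ode_zero_forward[where d = "\<lambda>x. d (- x)" and t = "- t" and r = "- r"
        and d' = "\<lambda>x. - d' (- x)" and C = C])
    show "((\<lambda>x. d (- x)) has_vector_derivative - d' (- \<tau>)) (at \<tau>)" for \<tau>
      using vector_diff_chain_at[OF has_vector_derivative_minus[OF has_vector_derivative_id] der]
      by (simp add: o_def)
    show "norm (- d' (- \<tau>)) \<le> C * norm (d (- \<tau>))" if "\<tau> \<in> {- r..- t}" for \<tau>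
      using bound[of "- \<tau>"] that False by auto
  qed (use assms False in auto)
  then show ?thesis by simp
qed

section \<open>Inverses and evolution operators\<close>

lemma tendsto_blinfun_inverse:
  fixes F G :: "real \<Rightarrow> 'a::banach \<Rightarrow>\<^sub>L 'a"
  assumes inverse: "\<And>y. F y o\<^sub>L G y = id_blinfun" "\<And>y. G y o\<^sub>L F y = id_blinfun"
    and G_cont: "(G \<longlongrightarrow> G x) (at x)"
  shows "(F \<longlongrightarrow> F x) (at x)"
proof -
  have G_diff: "((\<lambda>y. norm (G y - G x)) \<longlongrightarrow> 0) (at x)"
    using tendsto_norm_zero[OF LIM_zero[OF G_cont]] .
  have "\<forall>\<^sub>F y in at x. norm (G y - G x) * norm (F x) \<le> 1/2"
    using order_tendstoD(2)[OF tendsto_mult_left_zero[OF G_diff, of "norm (F x)"], of "1/2"]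
    by (auto elim: eventually_mono)
  then have "\<forall>\<^sub>F y in at x. norm (F y - F x) \<le> 2 * norm (F x) * norm (F x) * norm (G y - G x)"
  proof eventually_elim
    case (elim y)
    have "F y - F x = - (F y o\<^sub>L (G y - G x) o\<^sub>L F x)"
      using inverse by (simp add: blinfun_compose_distrib blinfun_compose_assoc)
    then have diff: "norm (F y - F x) \<le> norm (F y) * norm (G y - G x) * norm (F x)"
      by (metis norm_minus_cancel norm_blinfun_compose3)
    also have "\<dots> \<le> norm (F y) * (1/2)"
      using mult_left_mono[OF elim norm_ge_zero[of "F y"]] by (simp add: mult.assoc)
    finally have "norm (F y) \<le> 2 * norm (F x)"
      using norm_triangle_ineq2[of "F y" "F x"] by simp
    then show ?case
      using diff by (smt (verit, best) mult.commute mult.left_commute mult_right_mono norm_ge_zero)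
  qed
  moreover have "((\<lambda>y. 2 * norm (F x) * norm (F x) * norm (G y - G x)) \<longlongrightarrow> 0) (at x)"
    using tendsto_mult_right_zero[OF G_diff] by simp
  ultimately have "((\<lambda>y. F y - F x) \<longlongrightarrow> 0) (at x)"
    by (rule Lim_null_comparison)
  then show ?thesis
    by (simp add: LIM_zero_iff)
qed

lemma blinfun_inverse_difference_le:
  fixes F G :: "real \<Rightarrow> 'a::banach \<Rightarrow>\<^sub>L 'a"
  assumes inverse: "\<And>z. F z o\<^sub>L G z = id_blinfun" "\<And>z. G z o\<^sub>L F z = id_blinfun"
  shows "norm (F y - F x - (y - x) *\<^sub>R - (F x o\<^sub>L G' o\<^sub>L F x))
    \<le> norm (F y) * norm (G y - G x - (y - x) *\<^sub>R G') * norm (F x)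
      + norm (y - x) * (norm (F y - F x) * norm G' * norm (F x))"
proof -
  have apply_inverse: "F y (G y v) = v" "G y (F y v) = v" for y v
    using inverse[of y] by (metis blinfun_apply_blinfun_compose blinfun_apply_id_blinfun)+
  have "F y - F x - (y - x) *\<^sub>R - (F x o\<^sub>L G' o\<^sub>L F x)
      = - (F y o\<^sub>L (G y - G x - (y - x) *\<^sub>R G') o\<^sub>L F x) - (y - x) *\<^sub>R ((F y - F x) o\<^sub>L G' o\<^sub>L F x)"
    by (rule blinfun_eqI) (simp add: blinfun.bilinear_simps scaleR_diff_right apply_inverse)
  then have "norm (F y - F x - (y - x) *\<^sub>R - (F x o\<^sub>L G' o\<^sub>L F x))
      \<le> norm (F y o\<^sub>L (G y - G x - (y - x) *\<^sub>R G') o\<^sub>L F x) + norm ((y - x) *\<^sub>R ((F y - F x) o\<^sub>L G' o\<^sub>L F x))"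
    by (metis norm_minus_cancel norm_triangle_ineq4)
  also have "\<dots> \<le> norm (F y) * norm (G y - G x - (y - x) *\<^sub>R G') * norm (F x)
      + norm (y - x) * (norm (F y - F x) * norm G' * norm (F x))"
    using norm_blinfun_compose3 by (auto intro!: add_mono mult_left_mono)
  finally show ?thesis .
qed

lemma has_vector_derivative_blinfun_inverse:
  fixes F G :: "real \<Rightarrow> 'a::banach \<Rightarrow>\<^sub>L 'a"
  assumes inverse: "\<And>y. F y o\<^sub>L G y = id_blinfun" "\<And>y. G y o\<^sub>L F y = id_blinfun"
    and G_deriv: "(G has_vector_derivative G') (at x)"
  shows "(F has_vector_derivative - (F x o\<^sub>L G' o\<^sub>L F x)) (at x)"
proof -
  have F_cont: "(F \<longlongrightarrow> F x) (at x)"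
    using has_vector_derivative_continuous[OF G_deriv]
    by (intro tendsto_blinfun_inverse[OF inverse]) (simp add: isCont_def)
  define \<rho> where "\<rho> y = norm (G y - G x - (y - x) *\<^sub>R G') / norm (y - x)" for y
  have \<rho>_lim: "(\<rho> \<longlongrightarrow> 0) (at x)"
    using G_deriv unfolding \<rho>_def has_vector_derivative_def has_derivative_iff_norm by simp
  define F' where "F' = - (F x o\<^sub>L G' o\<^sub>L F x)"
  define R where "R y = norm (F y) * \<rho> y * norm (F x) + norm (F y - F x) * norm G' * norm (F x)" for y
  have "((\<lambda>y. norm (F y - F x)) \<longlongrightarrow> 0) (at x)"
    using tendsto_norm_zero[OF LIM_zero[OF F_cont]] .
  then have "(R \<longlongrightarrow> norm (F x) * 0 * norm (F x) + 0 * norm G' * norm (F x)) (at x)"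
    unfolding R_def by (intro tendsto_add tendsto_mult tendsto_const tendsto_norm F_cont \<rho>_lim)
  then have R_lim: "(R \<longlongrightarrow> 0) (at x)"
    by simp
  have "norm (F y - F x - (y - x) *\<^sub>R F') / norm (y - x) \<le> R y" if "y \<noteq> x" for y
    using blinfun_inverse_difference_le[where F = F and G = G and x = x and y = y and G' = G', OF inverse] that
    by (simp add: R_def \<rho>_def F'_def divide_simps) (simp add: algebra_simps)
  then have "\<forall>\<^sub>F y in at x. norm (norm (F y - F x - (y - x) *\<^sub>R F') / norm (y - x)) \<le> R y"
    unfolding eventually_at_filter by (intro always_eventually) auto
  from Lim_null_comparison[OF this R_lim]
  have "((\<lambda>y. norm (F y - F x - (y - x) *\<^sub>R F') / norm (y - x)) \<longlongrightarrow> 0) (at x)" .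
  then show ?thesis
    unfolding has_vector_derivative_def has_derivative_iff_norm F'_def[symmetric]
    by (auto intro: bounded_linear_scaleR_left)
qed

lemma evolution_operator_id [simp]: "evolution_operator G E \<Longrightarrow> E s s = id_blinfun"
  by (simp add: evolution_operator_def)

lemma evolution_operator_has_vector_derivative:
  "evolution_operator G E \<Longrightarrow> ((\<lambda>t. E t s) has_vector_derivative (G t o\<^sub>L E t s)) (at t)"
  by (simp add: evolution_operator_def)

lemma evolution_operator_continuous_on:
  "evolution_operator G E \<Longrightarrow> continuous_on S (\<lambda>t. E t s)"
  using has_vector_derivative_continuous[OF evolution_operator_has_vector_derivative]
  by (blast intro: continuous_at_imp_continuous_on)

lemma evolution_operator_reflect:
  assumes "evolution_operator G E"
  shows "evolution_operator (\<lambda>t. - G (- t)) (\<lambda>t s. E (- t) (- s))"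
  unfolding evolution_operator_def
proof (intro conjI allI)
  fix t s :: real
  have "((\<lambda>t. E t (- s)) \<circ> uminus has_vector_derivative
      (- 1) *\<^sub>R (G (- t) o\<^sub>L E (- t) (- s))) (at t)"
    using vector_diff_chain_at[OF has_vector_derivative_minus[OF has_vector_derivative_id]
        evolution_operator_has_vector_derivative[OF assms]] by simp
  then show "((\<lambda>t. E (- t) (- s)) has_vector_derivative (- G (- t) o\<^sub>L E (- t) (- s))) (at t)"
    by (simp add: o_def blinfun_compose_distrib)
qed (use assms in simp)

lemma evolution_operator_cocycle:
  assumes E: "evolution_operator G E" and G_bounded: "\<And>a b. bounded (G ` {a..b})"
  shows "E t r o\<^sub>L E r s = E t s"
proof -
  define d where "d \<tau> = (E \<tau> r o\<^sub>L E r s) - E \<tau> s" for \<tau>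
  have "((\<lambda>\<tau>. E \<tau> r o\<^sub>L E r s) has_vector_derivative (G \<tau> o\<^sub>L E \<tau> r) o\<^sub>L E r s) (at \<tau>)" for \<tau>
    using bounded_bilinear.has_vector_derivative[OF bounded_bilinear_blinfun_compose
        evolution_operator_has_vector_derivative[OF E] has_vector_derivative_const]
    by simp
  then have d_deriv: "(d has_vector_derivative (G \<tau> o\<^sub>L d \<tau>)) (at \<tau>)" for \<tau>
    unfolding d_def
    by (auto intro!: has_vector_derivative_diff evolution_operator_has_vector_derivative[OF E]
        simp: blinfun_compose_assoc blinfun_compose_distrib)
  obtain C where C: "\<forall>\<tau>\<in>{min r t..max r t}. norm (G \<tau>) \<le> C"
    using G_bounded[of "min r t" "max r t"] by (auto simp: bounded_iff)
  have "d t = 0"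
  proof (rule linear_ode_zero[OF d_deriv, where C = "max C 0"])
    fix \<tau> assume "\<tau> \<in> {min r t..max r t}"
    then have "norm (G \<tau>) \<le> max C 0"
      using C by force
    then show "norm (G \<tau> o\<^sub>L d \<tau>) \<le> max C 0 * norm (d \<tau>)"
      by (meson norm_blinfun_compose order_trans mult_right_mono norm_ge_zero)
  qed (auto simp: d_def evolution_operator_id[OF E])
  then show ?thesis
    by (simp add: d_def)
qed

lemma evolution_operator_has_vector_derivative_initial:
  assumes E: "evolution_operator G E" and G_bounded: "\<And>a b. bounded (G ` {a..b})"
  shows "((\<lambda>\<tau>. E t \<tau>) has_vector_derivative - (E t \<tau> o\<^sub>L G \<tau>)) (at \<tau>)"
proof -
  note cocycle = evolution_operator_cocycle[OF E G_bounded]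
  have "((\<lambda>\<tau>. E 0 \<tau>) has_vector_derivative - (E 0 \<tau> o\<^sub>L (G \<tau> o\<^sub>L E \<tau> 0) o\<^sub>L E 0 \<tau>)) (at \<tau>)"
    by (rule has_vector_derivative_blinfun_inverse[where G = "\<lambda>\<tau>. E \<tau> 0"])
      (auto simp: cocycle evolution_operator_id[OF E] evolution_operator_has_vector_derivative[OF E])
  then have "((\<lambda>\<tau>. E 0 \<tau>) has_vector_derivative - (E 0 \<tau> o\<^sub>L G \<tau>)) (at \<tau>)"
    by (simp add: blinfun_compose_assoc cocycle evolution_operator_id[OF E])
  from bounded_bilinear.has_vector_derivative[OF bounded_bilinear_blinfun_compose
      has_vector_derivative_const this, of "E t 0"]
  show ?thesis
    by (simp add: cocycle blinfun_compose_distrib flip: blinfun_compose_assoc)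
qed

lemma evolution_operator_continuous_on_initial:
  assumes "evolution_operator G E" and "\<And>a b. bounded (G ` {a..b})"
  shows "continuous_on S (\<lambda>\<tau>. E t \<tau>)"
  using evolution_operator_has_vector_derivative_initial[OF assms]
  by (meson continuous_at_imp_continuous_on has_vector_derivative_continuous)

lemma evolution_operator_bounded_on_square:
  assumes E: "evolution_operator G E" and G_bounded: "\<And>a b. bounded (G ` {a..b})"
  obtains C where "0 \<le> C" "\<And>t \<tau>. t \<in> {a..b} \<Longrightarrow> \<tau> \<in> {a..b} \<Longrightarrow> norm (E t \<tau>) \<le> C"
proof -
  have "bounded ((\<lambda>t. E t 0) ` {a..b})" "bounded ((\<lambda>\<tau>. E 0 \<tau>) ` {a..b})"
    using evolution_operator_continuous_on[OF E] evolution_operator_continuous_on_initial[OF E G_bounded]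
    by (auto intro!: compact_imp_bounded compact_continuous_image)
  then obtain C1 C2 where C1: "\<forall>t\<in>{a..b}. norm (E t 0) \<le> C1"
    and C2: "\<forall>\<tau>\<in>{a..b}. norm (E 0 \<tau>) \<le> C2"
    by (auto simp: bounded_iff)
  have "norm (E t \<tau>) \<le> max 0 C1 * max 0 C2" if "t \<in> {a..b}" "\<tau> \<in> {a..b}" for t \<tau>
  proof -
    have "norm (E t \<tau>) \<le> norm (E t 0) * norm (E 0 \<tau>)"
      using norm_blinfun_compose[of "E t 0" "E 0 \<tau>"] by (simp add: evolution_operator_cocycle[OF E G_bounded])
    also have "\<dots> \<le> max 0 C1 * max 0 C2"
      using C1 C2 that by (intro mult_mono) (auto simp: le_max_iff_disj)
    finally show ?thesis .
  qed
  then show ?thesis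
    by (intro that[of "max 0 C1 * max 0 C2"]) auto
qed

lemma variation_of_constants:
  assumes E: "evolution_operator G E" "\<And>a b. bounded (G ` {a..b})"
    and F: "evolution_operator (\<lambda>t. G t + B t) F" and "u \<le> t"
  shows "((\<lambda>\<tau>. E r \<tau> o\<^sub>L B \<tau> o\<^sub>L F \<tau> s) has_integral (E r t o\<^sub>L F t s) - (E r u o\<^sub>L F u s)) {u..t}"
proof (rule fundamental_theorem_of_calculus[OF \<open>u \<le> t\<close>, where f = "\<lambda>\<tau>. E r \<tau> o\<^sub>L F \<tau> s"],
    rule has_vector_derivative_at_within)
  fix \<tau>
  have "((\<lambda>\<tau>. E r \<tau> o\<^sub>L F \<tau> s) has_vector_derivative
      (E r \<tau> o\<^sub>L ((G \<tau> + B \<tau>) o\<^sub>L F \<tau> s)) + (- (E r \<tau> o\<^sub>L G \<tau>) o\<^sub>L F \<tau> s)) (at \<tau>)"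
    by (rule bounded_bilinear.has_vector_derivative[OF bounded_bilinear_blinfun_compose
          evolution_operator_has_vector_derivative_initial[OF E]
          evolution_operator_has_vector_derivative[OF F]])
  then show "((\<lambda>\<tau>. E r \<tau> o\<^sub>L F \<tau> s) has_vector_derivative E r \<tau> o\<^sub>L B \<tau> o\<^sub>L F \<tau> s) (at \<tau>)"
    by (simp add: blinfun_compose_distrib blinfun_compose_assoc)
qed

lemma volterra_zero:
  assumes E: "evolution_operator G E" "\<And>a b. bounded (G ` {a..b})"
    and B: "\<And>\<tau>. norm (B \<tau>) \<le> c"
    and D: "\<And>\<tau>. \<tau> \<in> {s..t} \<Longrightarrow> ((\<lambda>\<sigma>. E \<tau> \<sigma> o\<^sub>L B \<sigma> o\<^sub>L D \<sigma>) has_integral D \<tau>) {s..\<tau>}"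
    and D_cont: "continuous_on {s..t} D" and "s \<le> t"
  shows "D t = 0"
proof -
  obtain C where "0 \<le> C" and C: "\<And>t' \<tau>. t' \<in> {s..t} \<Longrightarrow> \<tau> \<in> {s..t} \<Longrightarrow> norm (E t' \<tau>) \<le> C"
    using evolution_operator_bounded_on_square[OF E] by blast
  have "0 \<le> c"
    using B[of 0] norm_ge_zero order_trans by blast
  have "norm (D t) = 0"
  proof (rule gronwall_zero[where \<phi> = "\<lambda>x. norm (D x)" and C = "C * c"])
    show "continuous_on {s..t} (\<lambda>x. norm (D x))"
      by (intro continuous_intros D_cont)
    fix \<tau> assume \<tau>: "\<tau> \<in> {s..t}"
    have bound_integrable: "(\<lambda>x. C * c * norm (D x)) integrable_on {s..\<tau>}"
      by (rule integrable_continuous_real)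
        (use \<tau> in \<open>intro continuous_intros continuous_on_subset[OF D_cont], auto\<close>)
    have "norm (integral {s..\<tau>} (\<lambda>\<sigma>. E \<tau> \<sigma> o\<^sub>L B \<sigma> o\<^sub>L D \<sigma>)) \<le> integral {s..\<tau>} (\<lambda>x. C * c * norm (D x))"
    proof (rule integral_norm_bound_integral[OF has_integral_integrable[OF D[OF \<tau>]] bound_integrable])
      fix \<sigma> assume \<sigma>: "\<sigma> \<in> {s..\<tau>}"
      have "norm (E \<tau> \<sigma> o\<^sub>L B \<sigma> o\<^sub>L D \<sigma>) \<le> norm (E \<tau> \<sigma>) * norm (B \<sigma>) * norm (D \<sigma>)"
        by (rule norm_blinfun_compose3)
      also have "\<dots> \<le> C * c * norm (D \<sigma>)"
        using C[of \<tau> \<sigma>] B[of \<sigma>] \<sigma> \<tau> \<open>0 \<le> C\<close> \<open>0 \<le> c\<close> by (intro mult_mono) auto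
      finally show "norm (E \<tau> \<sigma> o\<^sub>L B \<sigma> o\<^sub>L D \<sigma>) \<le> C * c * norm (D \<sigma>)" .
    qed
    then show "norm (D \<tau>) \<le> C * c * integral {s..\<tau>} (\<lambda>x. norm (D x))"
      using integral_unique[OF D[OF \<tau>]] by simp
  qed (use \<open>0 \<le> C\<close> \<open>0 \<le> c\<close> \<open>s \<le> t\<close> in auto)
  then show ?thesis
    by simp
qed

lemma growth_rate_pos: "growth_rate u \<Longrightarrow> 0 < u t"
  by (simp add: growth_rate_def)

lemma growth_rate_mono: "growth_rate u \<Longrightarrow> t \<le> s \<Longrightarrow> u t \<le> u s"
  by (simp add: growth_rate_def mono_def)

lemma growth_rate_abs_ge_one: "growth_rate u \<Longrightarrow> 1 \<le> u \<bar>t\<bar>"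
  using growth_rate_mono[of u 0 "\<bar>t\<bar>"] by (simp add: growth_rate_def)

lemma growth_rate_reflect:
  assumes "growth_rate u"
  shows "growth_rate (\<lambda>t. inverse (u (- t)))"
proof -
  have pos: "u t > 0" for t
    using assms by (simp add: growth_rate_def)
  have "mono (\<lambda>t. inverse (u (- t)))"
    using assms pos by (auto simp: growth_rate_def mono_def intro!: le_imp_inverse_le)
  moreover have "filterlim (\<lambda>t. inverse (u (- t))) at_top at_top"
    using assms pos by (intro filterlim_inverse_at_top) (auto simp: growth_rate_def filterlim_at_top_mirror)
  moreover have "((\<lambda>t. inverse (u (- t))) \<longlongrightarrow> 0) at_bot"
    using assms by (intro tendsto_inverse_0_at_top) (simp add: growth_rate_def filterlim_at_bot_mirror)
  ultimately show ?thesis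
    using assms pos by (simp add: growth_rate_def)
qed

section \<open>The perturbed dichotomy\<close>

locale dichotomy_perturbation =
  fixes A :: "real \<Rightarrow> 'x::banach \<Rightarrow>\<^sub>L 'x"
    and T :: "real \<Rightarrow> real \<Rightarrow> 'x \<Rightarrow>\<^sub>L 'x"
    and P :: "real \<Rightarrow> 'x \<Rightarrow>\<^sub>L 'x"
    and h k \<mu> \<nu> :: "real \<Rightarrow> real"
    and a b \<epsilon> K c \<omega> N :: real
    and B :: "real \<Rightarrow> 'x \<Rightarrow>\<^sub>L 'x"
    and U That :: "real \<Rightarrow> real \<Rightarrow> 'x \<Rightarrow>\<^sub>L 'x"
  assumes A_cont: "continuous_on UNIV A"
    and T_evol: "evolution_operator A T"
    and growth_rates: "growth_rate h" "growth_rate k" "growth_rate \<mu>" "growth_rate \<nu>"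
    and P_proj: "\<And>t. P t o\<^sub>L P t = P t"
    and P_inv: "\<And>t s. P t o\<^sub>L T t s = T t s o\<^sub>L P s"
    and a_nonpos: "a \<le> 0" and b_nonneg: "0 \<le> b" and \<epsilon>_nonneg: "0 \<le> \<epsilon>" and K_pos: "0 < K"
    and dich_P: "\<And>t s. s \<le> t \<Longrightarrow>
        norm (T t s o\<^sub>L P s) \<le> K * (h t / h s) powr a * \<mu> \<bar>s\<bar> powr \<epsilon>"
    and dich_Q: "\<And>t s. t \<le> s \<Longrightarrow>
        norm (T t s o\<^sub>L (id_blinfun - P s)) \<le> K * (k s / k t) powr (-b) * \<nu> \<bar>s\<bar> powr \<epsilon>"
    and lim_k: "((\<lambda>t. k t powr (-b) * \<nu> \<bar>t\<bar> powr \<epsilon>) \<longlongrightarrow> 0) at_top"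
    and c_pos: "0 < c" and \<omega>_pos: "0 < \<omega>"
    and B_bound: "\<And>t. norm (B t) \<le> c * min (\<mu> \<bar>t\<bar> powr (-\<omega>-\<epsilon>)) (\<nu> \<bar>t\<bar> powr (-\<omega>-\<epsilon>))"
    and \<mu>_integrable: "\<And>t. (\<lambda>\<tau>. \<mu> \<bar>\<tau>\<bar> powr (-\<omega>)) integrable_on {..t}"
    and \<nu>_integrable: "\<And>t. (\<lambda>\<tau>. \<nu> \<bar>\<tau>\<bar> powr (-\<omega>)) integrable_on {t..}"
    and N_bound: "\<And>t. \<nu> \<bar>t\<bar> powr \<epsilon> * integral {..t} (\<lambda>\<tau>. \<mu> \<bar>\<tau>\<bar> powr (-\<omega>))
        + \<mu> \<bar>t\<bar> powr \<epsilon> * integral {t..} (\<lambda>\<tau>. \<nu> \<bar>\<tau>\<bar> powr (-\<omega>)) \<le> N"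
    and c_small: "c < 1 / (K * N * (2 * K + 1))"
    and U_cont: "\<And>s. continuous_on {s..} (\<lambda>t. U t s)"
    and U_Omega1: "\<And>s. \<exists>M. \<forall>t\<ge>s.
        norm (U t s) * (h t / h s) powr (-a) * \<mu> \<bar>s\<bar> powr (-\<epsilon>) \<le> M"
    and U_eq: "\<And>t s. s \<le> t \<Longrightarrow> \<exists>I1 I2.
        ((\<lambda>\<tau>. T t \<tau> o\<^sub>L P \<tau> o\<^sub>L B \<tau> o\<^sub>L U \<tau> s) has_integral I1) {s..t} \<and>
        ((\<lambda>\<tau>. T t \<tau> o\<^sub>L (id_blinfun - P \<tau>) o\<^sub>L B \<tau> o\<^sub>L U \<tau> s) has_integral I2) {t..} \<and>
        U t s = (T t s o\<^sub>L P s) + I1 - I2"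
    and That_evol: "evolution_operator (\<lambda>t. A t + B t) That"
begin

abbreviation Q where "Q t \<equiv> id_blinfun - P t"

lemma growth_pos [simp]: "0 < h t" "0 < k t" "0 < \<mu> t" "0 < \<nu> t"
  using growth_rates growth_rate_pos by auto

lemma growth_nonneg [simp]: "0 \<le> h t" "0 \<le> k t" "0 \<le> \<mu> t" "0 \<le> \<nu> t"
  using growth_pos by (simp_all add: less_imp_le)

lemma growth_nonzero [simp]: "h t \<noteq> 0" "k t \<noteq> 0" "\<mu> t \<noteq> 0" "\<nu> t \<noteq> 0"
  using growth_pos by (metis less_irrefl)+

lemma growth_powr_ge_one: "1 \<le> \<mu> \<bar>t\<bar> powr \<epsilon>" "1 \<le> \<nu> \<bar>t\<bar> powr \<epsilon>"
  using growth_rates growth_rate_abs_ge_one \<epsilon>_nonneg by (auto intro: ge_one_powr_ge_zero)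

lemma growth_powr_neg_le_one: "\<mu> \<bar>t\<bar> powr (-\<omega>-\<epsilon>) \<le> 1" "\<nu> \<bar>t\<bar> powr (-\<omega>-\<epsilon>) \<le> 1"
  using growth_rates growth_rate_abs_ge_one \<omega>_pos \<epsilon>_nonneg powr_mono[of "-\<omega>-\<epsilon>" 0]
  by fastforce+

lemma constants_nonneg [simp]: "0 \<le> K" "0 \<le> c"
  using K_pos c_pos by simp_all

lemma norm_B_le: "norm (B t) \<le> c * \<mu> \<bar>t\<bar> powr (-\<omega>-\<epsilon>)" "norm (B t) \<le> c * \<nu> \<bar>t\<bar> powr (-\<omega>-\<epsilon>)"
  using B_bound[of t] c_pos by (auto intro: order_trans simp: mult_left_mono)

lemma norm_B_le_c: "norm (B t) \<le> c"
  using norm_B_le(1)[of t] growth_powr_neg_le_one(1)[of t] c_pos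
  by (meson mult_left_le order_trans less_imp_le)

lemma generators_bounded: "bounded (A ` {s..t})" "bounded ((\<lambda>t. A t + B t) ` {s..t})"
proof -
  show A_bounded: "bounded (A ` {s..t})"
    using A_cont by (intro compact_imp_bounded compact_continuous_image) (auto intro: continuous_on_subset)
  then obtain C where "\<forall>\<tau>\<in>{s..t}. norm (A \<tau>) \<le> C"
    by (auto simp: bounded_iff)
  then have "\<forall>\<tau>\<in>{s..t}. norm (A \<tau> + B \<tau>) \<le> C + c"
    using norm_B_le_c by (meson add_mono norm_triangle_ineq order_trans)
  then show "bounded ((\<lambda>t. A t + B t) ` {s..t})"
    by (auto simp: bounded_iff)
qed

lemma T_id [simp]: "T s s = id_blinfun" and That_id [simp]: "That s s = id_blinfun"
  using T_evol That_evol by simp_all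

lemma T_cocycle: "T t r o\<^sub>L T r s = T t s" and That_cocycle: "That t r o\<^sub>L That r s = That t s"
  using evolution_operator_cocycle[OF T_evol generators_bounded(1)]
    evolution_operator_cocycle[OF That_evol generators_bounded(2)] by auto

lemma T_cocycle_assoc: "T t r o\<^sub>L (T r s o\<^sub>L X) = T t s o\<^sub>L X"
  and That_cocycle_assoc: "That t r o\<^sub>L (That r s o\<^sub>L X) = That t s o\<^sub>L X"
  by (simp_all add: T_cocycle That_cocycle flip: blinfun_compose_assoc)

lemma T_That_variation:
  "u \<le> t \<Longrightarrow> ((\<lambda>\<tau>. T r \<tau> o\<^sub>L B \<tau> o\<^sub>L That \<tau> s) has_integral
     (T r t o\<^sub>L That t s) - (T r u o\<^sub>L That u s)) {u..t}"
  by (rule variation_of_constants[OF T_evol generators_bounded(1) That_evol])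

lemma projections [simp]:
  "P t o\<^sub>L (P t o\<^sub>L X) = P t o\<^sub>L X" "Q t o\<^sub>L (Q t o\<^sub>L X) = Q t o\<^sub>L X"
  "P t o\<^sub>L (Q t o\<^sub>L X) = 0" "Q t o\<^sub>L (P t o\<^sub>L X) = 0"
  "P t o\<^sub>L Q t = 0" "Q t o\<^sub>L P t = 0" "Q t o\<^sub>L Q t = Q t"
  by (simp_all add: blinfun_compose_distrib P_proj flip: blinfun_compose_assoc)

lemma projections_commute:
  "P t o\<^sub>L (T t s o\<^sub>L X) = T t s o\<^sub>L (P s o\<^sub>L X)" "Q t o\<^sub>L (T t s o\<^sub>L X) = T t s o\<^sub>L (Q s o\<^sub>L X)"
  by (simp_all add: blinfun_compose_distrib P_inv flip: blinfun_compose_assoc)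

lemma split_integrand:
  "T t \<tau> o\<^sub>L B \<tau> o\<^sub>L Z = (T t \<tau> o\<^sub>L P \<tau> o\<^sub>L B \<tau> o\<^sub>L Z) + (T t \<tau> o\<^sub>L Q \<tau> o\<^sub>L B \<tau> o\<^sub>L Z)"
  by (simp add: blinfun_compose_distrib)

definition left_tail :: "real \<Rightarrow> real" where
  "left_tail t = integral {..t} (\<lambda>\<tau>. \<mu> \<bar>\<tau>\<bar> powr (-\<omega>))"

definition right_tail :: "real \<Rightarrow> real" where
  "right_tail t = integral {t..} (\<lambda>\<tau>. \<nu> \<bar>\<tau>\<bar> powr (-\<omega>))"

lemma tails_nonneg: "0 \<le> left_tail t" "0 \<le> right_tail t"
  unfolding left_tail_def right_tail_def by (auto intro!: integral_nonneg \<mu>_integrable \<nu>_integrable)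

lemma weighted_tails_le_N: "\<nu> \<bar>t\<bar> powr \<epsilon> * left_tail t + \<mu> \<bar>t\<bar> powr \<epsilon> * right_tail t \<le> N"
  using N_bound[of t] unfolding left_tail_def right_tail_def .

lemma tails_le_N: "left_tail t + right_tail t \<le> N"
proof -
  have "left_tail t \<le> \<nu> \<bar>t\<bar> powr \<epsilon> * left_tail t"
    using growth_powr_ge_one(2)[of t] tails_nonneg(1)[of t] by (simp add: mult_le_cancel_right1)
  moreover have "right_tail t \<le> \<mu> \<bar>t\<bar> powr \<epsilon> * right_tail t"
    using growth_powr_ge_one(1)[of t] tails_nonneg(2)[of t] by (simp add: mult_le_cancel_right1)
  ultimately show ?thesis
    using weighted_tails_le_N[of t] by linarith
qed

lemma N_pos: "0 < N"
proof -
  have "0 \<le> N"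
    using tails_le_N[of 0] tails_nonneg[of 0] by linarith
  moreover have "N \<noteq> 0"
    using c_small c_pos by auto
  ultimately show ?thesis
    by simp
qed

definition \<theta> :: real where "\<theta> = K * c * N"

definition K_hat :: real where "K_hat = K / (1 - K * c * N)"

lemma \<theta>_pos: "0 < \<theta>"
  using K_pos c_pos N_pos by (simp add: \<theta>_def)

lemma \<theta>_small: "\<theta> * (2 * K + 1) < 1"
proof -
  have "0 < K * N * (2 * K + 1)"
    using K_pos N_pos by simp
  then have "c * (K * N * (2 * K + 1)) < 1"
    using c_small by (simp add: field_simps)
  then show ?thesis
    by (simp add: \<theta>_def mult_ac)
qed

lemma \<theta>_less_one: "\<theta> < 1"
proof -
  have "\<theta> * 1 \<le> \<theta> * (2 * K + 1)"
    using \<theta>_pos K_pos by (intro mult_left_mono) auto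
  then show ?thesis
    using \<theta>_small by simp
qed

lemma K_hat_pos: "0 < K_hat"
  unfolding K_hat_def \<theta>_def[symmetric] using K_pos \<theta>_less_one by simp

subsection \<open>The weight of \<open>\<Omega>\<^sub>1\<close> and the integral equation\<close>

definition weight :: "real \<Rightarrow> real \<Rightarrow> real" where
  "weight s t = (h t / h s) powr a * \<mu> \<bar>s\<bar> powr \<epsilon>"

lemma weight_pos: "0 < weight s t"
  by (simp add: weight_def)

lemma weight_nonneg [simp]: "0 \<le> weight s t"
  by (simp add: weight_def)

lemma weight_antimono: "t \<le> \<tau> \<Longrightarrow> weight s \<tau> \<le> weight s t"
proof -
  assume "t \<le> \<tau>"
  then have "h t / h s \<le> h \<tau> / h s"
    using growth_rate_mono[OF growth_rates(1) \<open>t \<le> \<tau>\<close>] growth_pos(1)[of s]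
    by (intro divide_right_mono) auto
  then have "(h \<tau> / h s) powr a \<le> (h t / h s) powr a"
    using a_nonpos by (intro powr_mono2') auto
  then show ?thesis
    unfolding weight_def by (simp add: mult_right_mono)
qed

lemma weight_diag: "weight s s = \<mu> \<bar>s\<bar> powr \<epsilon>"
  by (simp add: weight_def)

lemma weight_le_diag: "s \<le> t \<Longrightarrow> weight s t \<le> \<mu> \<bar>s\<bar> powr \<epsilon>"
  using weight_antimono weight_diag by metis

lemma weight_trans: "weight r \<tau> = weight r s / \<mu> \<bar>s\<bar> powr \<epsilon> * weight s \<tau>"
proof -
  have "(h \<tau> / h r) powr a = (h s / h r) powr a * (h \<tau> / h s) powr a"
    by (simp flip: powr_mult)
  then show ?thesis
    by (simp add: weight_def)
qed

lemma norm_TP_le: "s \<le> t \<Longrightarrow> norm (T t s o\<^sub>L P s) \<le> K * weight s t"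
  unfolding weight_def using dich_P by (simp add: mult.assoc)

lemma norm_TQ_le: "t \<le> s \<Longrightarrow> norm (T t s o\<^sub>L Q s) \<le> K * \<nu> \<bar>s\<bar> powr \<epsilon>"
proof -
  assume "t \<le> s"
  then have "1 \<le> k s / k t"
    using growth_rate_mono[OF growth_rates(2)] by simp
  then have "(k s / k t) powr (-b) \<le> 1"
    using powr_mono[of "-b" 0 "k s / k t"] b_nonneg by simp
  then have "K * (k s / k t) powr (-b) * \<nu> \<bar>s\<bar> powr \<epsilon> \<le> K * \<nu> \<bar>s\<bar> powr \<epsilon>"
    using K_pos by (simp add: mult_left_le)
  with dich_Q[OF \<open>t \<le> s\<close>] show ?thesis
    by linarith
qed

definition in_\<Omega>\<^sub>1 :: "real \<Rightarrow> (real \<Rightarrow> 'x \<Rightarrow>\<^sub>L 'x) \<Rightarrow> bool" where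
  "in_\<Omega>\<^sub>1 s Z \<longleftrightarrow> (\<exists>M. \<forall>t\<ge>s. norm (Z t) \<le> M * weight s t)"

definition solves_U_eq :: "real \<Rightarrow> ('x \<Rightarrow>\<^sub>L 'x) \<Rightarrow> (real \<Rightarrow> 'x \<Rightarrow>\<^sub>L 'x) \<Rightarrow> bool" where
  "solves_U_eq s Y Z \<longleftrightarrow> (\<forall>t\<ge>s. \<exists>I1 I2.
      ((\<lambda>\<tau>. T t \<tau> o\<^sub>L P \<tau> o\<^sub>L B \<tau> o\<^sub>L Z \<tau>) has_integral I1) {s..t} \<and>
      ((\<lambda>\<tau>. T t \<tau> o\<^sub>L Q \<tau> o\<^sub>L B \<tau> o\<^sub>L Z \<tau>) has_integral I2) {t..} \<and>
      Z t = (T t s o\<^sub>L Y) + I1 - I2)"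

lemma weight_bound_nonneg: "(\<And>t. s \<le> t \<Longrightarrow> norm (Z t) \<le> M * weight s t) \<Longrightarrow> 0 \<le> M"
  using norm_ge_zero[of "Z s"] weight_pos[of s s] by (metis order_refl order_trans zero_le_mult_iff not_le)

lemma norm_P_integrand_le:
  assumes "s \<le> \<tau>" "\<tau> \<le> t" "norm (Z \<tau>) \<le> M * weight s \<tau>" "0 \<le> M"
  shows "norm (T t \<tau> o\<^sub>L P \<tau> o\<^sub>L B \<tau> o\<^sub>L Z \<tau>) \<le> K * c * M * weight s t * \<mu> \<bar>\<tau>\<bar> powr (-\<omega>)"
proof -
  have "norm (T t \<tau> o\<^sub>L P \<tau> o\<^sub>L B \<tau> o\<^sub>L Z \<tau>) \<le> norm (T t \<tau> o\<^sub>L P \<tau>) * norm (B \<tau>) * norm (Z \<tau>)"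
    by (rule norm_blinfun_compose3)
  also have "\<dots> \<le> (K * weight \<tau> t) * (c * \<mu> \<bar>\<tau>\<bar> powr (-\<omega>-\<epsilon>)) * (M * weight s \<tau>)"
    using norm_TP_le[OF \<open>\<tau> \<le> t\<close>] norm_B_le(1)[of \<tau>] assms(3,4) K_pos
    by (intro mult_mono mult_nonneg_nonneg) auto
  also have "\<dots> = K * c * M * weight s t * (\<mu> \<bar>\<tau>\<bar> powr (-\<epsilon>) * \<mu> \<bar>\<tau>\<bar> powr \<epsilon> * \<mu> \<bar>\<tau>\<bar> powr (-\<omega>-\<epsilon>) * \<mu> \<bar>\<tau>\<bar> powr \<epsilon>)"
    by (simp add: weight_trans[of s t \<tau>] powr_minus field_simps)
  also have "\<mu> \<bar>\<tau>\<bar> powr (-\<epsilon>) * \<mu> \<bar>\<tau>\<bar> powr \<epsilon> * \<mu> \<bar>\<tau>\<bar> powr (-\<omega>-\<epsilon>) * \<mu> \<bar>\<tau>\<bar> powr \<epsilon> = \<mu> \<bar>\<tau>\<bar> powr (-\<omega>)"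
    by (simp flip: powr_add)
  finally show ?thesis .
qed

lemma norm_Q_integrand_le:
  assumes "s \<le> t" "t \<le> \<tau>" "norm (Z \<tau>) \<le> M * weight s \<tau>" "0 \<le> M"
  shows "norm (T t \<tau> o\<^sub>L Q \<tau> o\<^sub>L B \<tau> o\<^sub>L Z \<tau>) \<le> K * c * M * weight s t * \<nu> \<bar>\<tau>\<bar> powr (-\<omega>)"
proof -
  have "norm (Z \<tau>) \<le> M * weight s t"
    using assms(3,4) weight_antimono[OF \<open>t \<le> \<tau>\<close>, of s] by (meson mult_left_mono order_trans)
  then have "norm (T t \<tau> o\<^sub>L Q \<tau> o\<^sub>L B \<tau> o\<^sub>L Z \<tau>) \<le> (K * \<nu> \<bar>\<tau>\<bar> powr \<epsilon>) * (c * \<nu> \<bar>\<tau>\<bar> powr (-\<omega>-\<epsilon>)) * (M * weight s t)"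
    using norm_blinfun_compose3 norm_TQ_le[OF \<open>t \<le> \<tau>\<close>] norm_B_le(2)[of \<tau>] K_pos
    by (meson mult_mono mult_nonneg_nonneg norm_ge_zero order_trans)
  also have "\<dots> = K * c * M * weight s t * (\<nu> \<bar>\<tau>\<bar> powr \<epsilon> * \<nu> \<bar>\<tau>\<bar> powr (-\<omega>-\<epsilon>))"
    by (simp add: mult_ac)
  also have "\<nu> \<bar>\<tau>\<bar> powr \<epsilon> * \<nu> \<bar>\<tau>\<bar> powr (-\<omega>-\<epsilon>) = \<nu> \<bar>\<tau>\<bar> powr (-\<omega>)"
    by (simp flip: powr_add)
  finally show ?thesis .
qed

lemma norm_P_integral_le:
  assumes Z: "\<And>\<tau>. s \<le> \<tau> \<Longrightarrow> norm (Z \<tau>) \<le> M * weight s \<tau>"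
    and I1: "((\<lambda>\<tau>. T t \<tau> o\<^sub>L P \<tau> o\<^sub>L B \<tau> o\<^sub>L Z \<tau>) has_integral I1) {s..t}"
  shows "norm I1 \<le> K * c * M * weight s t * left_tail t"
proof -
  have "0 \<le> M"
    by (rule weight_bound_nonneg[OF Z])
  define C where "C = K * c * M * weight s t"
  have "0 \<le> C"
    using \<open>0 \<le> M\<close> by (simp add: C_def)
  have \<mu>_integrable': "(\<lambda>\<tau>. \<mu> \<bar>\<tau>\<bar> powr (-\<omega>)) integrable_on {s..t}"
    by (rule integrable_on_subinterval[OF \<mu>_integrable]) auto
  have "norm I1 = norm (integral {s..t} (\<lambda>\<tau>. T t \<tau> o\<^sub>L P \<tau> o\<^sub>L B \<tau> o\<^sub>L Z \<tau>))"
    using integral_unique[OF I1] by simp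
  also have "\<dots> \<le> integral {s..t} (\<lambda>\<tau>. C * \<mu> \<bar>\<tau>\<bar> powr (-\<omega>))"
  proof (rule integral_norm_bound_integral[OF has_integral_integrable[OF I1]
        integrable_on_mult_right[OF \<mu>_integrable']])
    fix \<tau> assume "\<tau> \<in> {s..t}"
    then show "norm (T t \<tau> o\<^sub>L P \<tau> o\<^sub>L B \<tau> o\<^sub>L Z \<tau>) \<le> C * \<mu> \<bar>\<tau>\<bar> powr (-\<omega>)"
      unfolding C_def using Z \<open>0 \<le> M\<close> by (intro norm_P_integrand_le) auto
  qed
  also have "\<dots> \<le> integral {..t} (\<lambda>\<tau>. C * \<mu> \<bar>\<tau>\<bar> powr (-\<omega>))"
    using \<open>0 \<le> C\<close> by (intro integral_subset_le integrable_on_mult_right \<mu>_integrable' \<mu>_integrable) auto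
  finally show ?thesis
    by (simp add: left_tail_def C_def)
qed

lemma norm_Q_integral_le:
  assumes Z: "\<And>\<tau>. s \<le> \<tau> \<Longrightarrow> norm (Z \<tau>) \<le> M * weight s \<tau>" and "s \<le> t"
    and I2: "((\<lambda>\<tau>. T t \<tau> o\<^sub>L Q \<tau> o\<^sub>L B \<tau> o\<^sub>L Z \<tau>) has_integral I2) {t..}"
  shows "norm I2 \<le> K * c * M * weight s t * right_tail t"
proof -
  have "0 \<le> M"
    by (rule weight_bound_nonneg[OF Z])
  have "norm I2 = norm (integral {t..} (\<lambda>\<tau>. T t \<tau> o\<^sub>L Q \<tau> o\<^sub>L B \<tau> o\<^sub>L Z \<tau>))"
    using integral_unique[OF I2] by simp
  also have "\<dots> \<le> integral {t..} (\<lambda>\<tau>. K * c * M * weight s t * \<nu> \<bar>\<tau>\<bar> powr (-\<omega>))"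
  proof (rule integral_norm_bound_integral[OF has_integral_integrable[OF I2]
        integrable_on_mult_right[OF \<nu>_integrable]])
    fix \<tau> assume "\<tau> \<in> {t..}"
    then show "norm (T t \<tau> o\<^sub>L Q \<tau> o\<^sub>L B \<tau> o\<^sub>L Z \<tau>) \<le> K * c * M * weight s t * \<nu> \<bar>\<tau>\<bar> powr (-\<omega>)"
      using Z \<open>0 \<le> M\<close> \<open>s \<le> t\<close> by (intro norm_Q_integrand_le) auto
  qed
  finally show ?thesis
    by (simp add: right_tail_def)
qed

lemma norm_integral_terms_le:
  assumes Z: "\<And>\<tau>. s \<le> \<tau> \<Longrightarrow> norm (Z \<tau>) \<le> M * weight s \<tau>" and "s \<le> t"
    and I1: "((\<lambda>\<tau>. T t \<tau> o\<^sub>L P \<tau> o\<^sub>L B \<tau> o\<^sub>L Z \<tau>) has_integral I1) {s..t}"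
    and I2: "((\<lambda>\<tau>. T t \<tau> o\<^sub>L Q \<tau> o\<^sub>L B \<tau> o\<^sub>L Z \<tau>) has_integral I2) {t..}"
  shows "norm (I1 - I2) \<le> \<theta> * M * weight s t"
proof -
  have "0 \<le> K * c * M * weight s t"
    using weight_bound_nonneg[OF Z] by simp
  have "norm (I1 - I2) \<le> K * c * M * weight s t * (left_tail t + right_tail t)"
    using norm_P_integral_le[OF Z I1] norm_Q_integral_le[OF Z \<open>s \<le> t\<close> I2] norm_triangle_ineq4[of I1 I2]
    by (simp add: distrib_left)
  also have "\<dots> \<le> K * c * M * weight s t * N"
    using tails_le_N \<open>0 \<le> K * c * M * weight s t\<close> by (intro mult_left_mono)
  finally show ?thesis
    by (simp add: \<theta>_def mult_ac)
qed

lemma solves_U_eq_diff: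
  assumes "solves_U_eq s Y1 Z1" "solves_U_eq s Y2 Z2"
  shows "solves_U_eq s (Y1 - Y2) (\<lambda>t. Z1 t - Z2 t)"
  unfolding solves_U_eq_def
proof (intro allI impI)
  fix t assume "s \<le> t"
  obtain I1 I2 where I: "((\<lambda>\<tau>. T t \<tau> o\<^sub>L P \<tau> o\<^sub>L B \<tau> o\<^sub>L Z1 \<tau>) has_integral I1) {s..t}"
    "((\<lambda>\<tau>. T t \<tau> o\<^sub>L Q \<tau> o\<^sub>L B \<tau> o\<^sub>L Z1 \<tau>) has_integral I2) {t..}" "Z1 t = (T t s o\<^sub>L Y1) + I1 - I2"
    using assms(1) \<open>s \<le> t\<close> unfolding solves_U_eq_def by blast
  obtain J1 J2 where J: "((\<lambda>\<tau>. T t \<tau> o\<^sub>L P \<tau> o\<^sub>L B \<tau> o\<^sub>L Z2 \<tau>) has_integral J1) {s..t}"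
    "((\<lambda>\<tau>. T t \<tau> o\<^sub>L Q \<tau> o\<^sub>L B \<tau> o\<^sub>L Z2 \<tau>) has_integral J2) {t..}" "Z2 t = (T t s o\<^sub>L Y2) + J1 - J2"
    using assms(2) \<open>s \<le> t\<close> unfolding solves_U_eq_def by blast
  show "\<exists>I1 I2. ((\<lambda>\<tau>. T t \<tau> o\<^sub>L P \<tau> o\<^sub>L B \<tau> o\<^sub>L (Z1 \<tau> - Z2 \<tau>)) has_integral I1) {s..t} \<and>
      ((\<lambda>\<tau>. T t \<tau> o\<^sub>L Q \<tau> o\<^sub>L B \<tau> o\<^sub>L (Z1 \<tau> - Z2 \<tau>)) has_integral I2) {t..} \<and>
      Z1 t - Z2 t = (T t s o\<^sub>L (Y1 - Y2)) + I1 - I2"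
  proof (intro exI conjI)
    show "((\<lambda>\<tau>. T t \<tau> o\<^sub>L P \<tau> o\<^sub>L B \<tau> o\<^sub>L (Z1 \<tau> - Z2 \<tau>)) has_integral I1 - J1) {s..t}"
      using has_integral_diff[OF I(1) J(1)] by (simp add: blinfun_compose_distrib(4))
    show "((\<lambda>\<tau>. T t \<tau> o\<^sub>L Q \<tau> o\<^sub>L B \<tau> o\<^sub>L (Z1 \<tau> - Z2 \<tau>)) has_integral I2 - J2) {t..}"
      using has_integral_diff[OF I(2) J(2)] by (simp add: blinfun_compose_distrib(4))
    show "Z1 t - Z2 t = (T t s o\<^sub>L (Y1 - Y2)) + (I1 - J1) - (I2 - J2)"
      unfolding I(3) J(3) by (simp add: blinfun_compose_distrib(4) algebra_simps)
  qed
qed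

lemma solves_U_eq_compose_right:
  assumes "solves_U_eq s Y Z"
  shows "solves_U_eq s (Y o\<^sub>L X) (\<lambda>t. Z t o\<^sub>L X)"
  unfolding solves_U_eq_def
proof (intro allI impI)
  fix t assume "s \<le> t"
  obtain I1 I2 where I: "((\<lambda>\<tau>. T t \<tau> o\<^sub>L P \<tau> o\<^sub>L B \<tau> o\<^sub>L Z \<tau>) has_integral I1) {s..t}"
    "((\<lambda>\<tau>. T t \<tau> o\<^sub>L Q \<tau> o\<^sub>L B \<tau> o\<^sub>L Z \<tau>) has_integral I2) {t..}" "Z t = (T t s o\<^sub>L Y) + I1 - I2"
    using assms \<open>s \<le> t\<close> unfolding solves_U_eq_def by blast
  show "\<exists>I1 I2. ((\<lambda>\<tau>. T t \<tau> o\<^sub>L P \<tau> o\<^sub>L B \<tau> o\<^sub>L (Z \<tau> o\<^sub>L X)) has_integral I1) {s..t} \<and>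
      ((\<lambda>\<tau>. T t \<tau> o\<^sub>L Q \<tau> o\<^sub>L B \<tau> o\<^sub>L (Z \<tau> o\<^sub>L X)) has_integral I2) {t..} \<and>
      Z t o\<^sub>L X = (T t s o\<^sub>L (Y o\<^sub>L X)) + I1 - I2"
  proof (intro exI conjI)
    show "((\<lambda>\<tau>. T t \<tau> o\<^sub>L P \<tau> o\<^sub>L B \<tau> o\<^sub>L (Z \<tau> o\<^sub>L X)) has_integral (I1 o\<^sub>L X)) {s..t}"
      using has_integral_blinfun_compose_right[OF I(1), of X] by (simp add: blinfun_compose_assoc)
    show "((\<lambda>\<tau>. T t \<tau> o\<^sub>L Q \<tau> o\<^sub>L B \<tau> o\<^sub>L (Z \<tau> o\<^sub>L X)) has_integral (I2 o\<^sub>L X)) {t..}"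
      using has_integral_blinfun_compose_right[OF I(2), of X] by (simp add: blinfun_compose_assoc)
    show "Z t o\<^sub>L X = (T t s o\<^sub>L (Y o\<^sub>L X)) + (I1 o\<^sub>L X) - (I2 o\<^sub>L X)"
      using I(3) by (simp add: blinfun_compose_distrib blinfun_compose_assoc)
  qed
qed

lemma in_\<Omega>\<^sub>1_diff:
  assumes "in_\<Omega>\<^sub>1 s Z1" "in_\<Omega>\<^sub>1 s Z2"
  shows "in_\<Omega>\<^sub>1 s (\<lambda>t. Z1 t - Z2 t)"
proof -
  obtain M1 M2 where "\<forall>t\<ge>s. norm (Z1 t) \<le> M1 * weight s t" "\<forall>t\<ge>s. norm (Z2 t) \<le> M2 * weight s t"
    using assms unfolding in_\<Omega>\<^sub>1_def by blast
  then have "norm (Z1 t - Z2 t) \<le> (M1 + M2) * weight s t" if "s \<le> t" for t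
    using that norm_triangle_ineq4[of "Z1 t" "Z2 t"] by (force simp: distrib_right)
  then show ?thesis
    unfolding in_\<Omega>\<^sub>1_def by blast
qed

lemma in_\<Omega>\<^sub>1_compose_right:
  assumes "in_\<Omega>\<^sub>1 s Z"
  shows "in_\<Omega>\<^sub>1 s (\<lambda>t. Z t o\<^sub>L X)"
proof -
  obtain M where M: "\<forall>t\<ge>s. norm (Z t) \<le> M * weight s t"
    using assms unfolding in_\<Omega>\<^sub>1_def by blast
  have "norm (Z t o\<^sub>L X) \<le> (M * norm X) * weight s t" if "s \<le> t" for t
  proof -
    have "norm (Z t o\<^sub>L X) \<le> norm (Z t) * norm X"
      by (rule norm_blinfun_compose)
    also have "\<dots> \<le> M * weight s t * norm X"
      using M that by (intro mult_right_mono) auto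
    finally show ?thesis
      by (simp add: mult_ac)
  qed
  then show ?thesis
    unfolding in_\<Omega>\<^sub>1_def by blast
qed

lemma solves_U_eq_bound_step:
  assumes Z: "solves_U_eq s Y Z" and M: "\<And>t. s \<le> t \<Longrightarrow> norm (Z t) \<le> M * weight s t"
    and Y: "\<And>t. s \<le> t \<Longrightarrow> norm (T t s o\<^sub>L Y) \<le> C * weight s t" and "s \<le> t"
  shows "norm (Z t) \<le> (C + \<theta> * M) * weight s t"
proof -
  obtain I1 I2 where I: "((\<lambda>\<tau>. T t \<tau> o\<^sub>L P \<tau> o\<^sub>L B \<tau> o\<^sub>L Z \<tau>) has_integral I1) {s..t}"
    "((\<lambda>\<tau>. T t \<tau> o\<^sub>L Q \<tau> o\<^sub>L B \<tau> o\<^sub>L Z \<tau>) has_integral I2) {t..}" "Z t = (T t s o\<^sub>L Y) + I1 - I2"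
    using Z \<open>s \<le> t\<close> unfolding solves_U_eq_def by blast
  have "norm (Z t) \<le> norm (T t s o\<^sub>L Y) + norm (I1 - I2)"
    using norm_triangle_ineq[of "T t s o\<^sub>L Y" "I1 - I2"] I(3) by (simp add: add_diff_eq)
  also have "\<dots> \<le> C * weight s t + \<theta> * M * weight s t"
    using Y[OF \<open>s \<le> t\<close>] norm_integral_terms_le[OF M \<open>s \<le> t\<close> I(1,2)] by (rule add_mono)
  finally show ?thesis
    by (simp add: algebra_simps)
qed

text \<open>A solution in \<open>\<Omega>\<^sub>1\<close> is bounded by the contraction argument: each substitution
  into the equation multiplies the excess over \<open>C / (1 - \<theta>)\<close> by \<open>\<theta>\<close>.\<close>

lemma in_\<Omega>\<^sub>1_solution_le:
  assumes Z: "in_\<Omega>\<^sub>1 s Z" "solves_U_eq s Y Z"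
    and Y: "\<And>t. s \<le> t \<Longrightarrow> norm (T t s o\<^sub>L Y) \<le> C * weight s t" and "s \<le> t"
  shows "norm (Z t) \<le> C / (1 - \<theta>) * weight s t"
proof -
  obtain M where M: "\<And>t. s \<le> t \<Longrightarrow> norm (Z t) \<le> M * weight s t"
    using Z(1) unfolding in_\<Omega>\<^sub>1_def by auto
  have "0 \<le> C"
    by (rule weight_bound_nonneg[OF Y])
  define D where "D = C / (1 - \<theta>)"
  have "0 \<le> D"
    using \<open>0 \<le> C\<close> \<theta>_less_one by (simp add: D_def)
  have D_fixpoint: "C + \<theta> * D = D"
    using \<theta>_less_one by (simp add: D_def field_simps)
  have iterate: "\<forall>t\<ge>s. norm (Z t) \<le> (D + \<theta> ^ n * M) * weight s t" for n
  proof (induction n)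
    case 0
    have "M * weight s t \<le> (D + \<theta> ^ 0 * M) * weight s t" for t
      using \<open>0 \<le> D\<close> by (simp add: mult_right_mono)
    then show ?case
      using M order_trans by blast
  next
    case (Suc n)
    have "norm (Z t) \<le> (C + \<theta> * (D + \<theta> ^ n * M)) * weight s t" if "s \<le> t" for t
      using solves_U_eq_bound_step[OF Z(2) _ Y that] Suc.IH by blast
    moreover have "C + \<theta> * (D + \<theta> ^ n * M) = D + \<theta> ^ Suc n * M"
      using D_fixpoint by (simp add: algebra_simps)
    ultimately show ?case
      by auto
  qed
  have "(\<lambda>n. (D + \<theta> ^ n * M) * weight s t) \<longlonglongrightarrow> (D + 0 * M) * weight s t"
    using \<theta>_pos \<theta>_less_one by (intro tendsto_intros LIMSEQ_power_zero) auto
  then show ?thesis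
    using iterate \<open>s \<le> t\<close> unfolding D_def[symmetric] by (intro LIMSEQ_le_const) auto
qed

lemma solves_U_eq_unique:
  assumes "solves_U_eq s Y Z1" "solves_U_eq s Y Z2" "in_\<Omega>\<^sub>1 s Z1" "in_\<Omega>\<^sub>1 s Z2" "s \<le> t"
  shows "Z1 t = Z2 t"
  using in_\<Omega>\<^sub>1_solution_le[OF in_\<Omega>\<^sub>1_diff[OF assms(3,4)] solves_U_eq_diff[OF assms(1,2)], of 0]
    \<open>s \<le> t\<close> by simp

lemma U_solves_U_eq: "solves_U_eq s (P s) (\<lambda>t. U t s)"
  unfolding solves_U_eq_def using U_eq by blast

lemma U_in_\<Omega>\<^sub>1: "in_\<Omega>\<^sub>1 s (\<lambda>t. U t s)"
proof -
  obtain M where M: "\<forall>t\<ge>s. norm (U t s) * (h t / h s) powr (-a) * \<mu> \<bar>s\<bar> powr (-\<epsilon>) \<le> M"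
    using U_Omega1 by blast
  have "norm (U t s) = (norm (U t s) * (h t / h s) powr (-a) * \<mu> \<bar>s\<bar> powr (-\<epsilon>)) * weight s t" for t
    by (simp add: weight_def powr_minus field_simps)
  then have "norm (U t s) \<le> M * weight s t" if "s \<le> t" for t
    using M that by (metis mult_right_mono weight_nonneg)
  then show ?thesis
    unfolding in_\<Omega>\<^sub>1_def by blast
qed

lemma norm_U_le: "s \<le> t \<Longrightarrow> norm (U t s) \<le> K_hat * weight s t"
  using in_\<Omega>\<^sub>1_solution_le[OF U_in_\<Omega>\<^sub>1 U_solves_U_eq norm_TP_le]
  by (simp add: K_hat_def \<theta>_def)

lemma U_compose_P:
  assumes "s \<le> t"
  shows "U t s o\<^sub>L P s = U t s"
proof -
  have "solves_U_eq s (P s) (\<lambda>t. U t s o\<^sub>L P s)"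
    using solves_U_eq_compose_right[OF U_solves_U_eq, of s "P s"] by (simp add: P_proj)
  from solves_U_eq_unique[OF this U_solves_U_eq in_\<Omega>\<^sub>1_compose_right[OF U_in_\<Omega>\<^sub>1] U_in_\<Omega>\<^sub>1 assms]
  show ?thesis .
qed

lemma U_compose_Q: "s \<le> t \<Longrightarrow> U t s o\<^sub>L Q s = 0"
  using U_compose_P by (simp add: blinfun_compose_distrib)

lemma U_diag: "\<exists>I. ((\<lambda>\<tau>. T s \<tau> o\<^sub>L Q \<tau> o\<^sub>L B \<tau> o\<^sub>L U \<tau> s) has_integral I) {s..} \<and> U s s = P s - I"
proof -
  obtain I1 I2 where I: "((\<lambda>\<tau>. T s \<tau> o\<^sub>L P \<tau> o\<^sub>L B \<tau> o\<^sub>L U \<tau> s) has_integral I1) {s..s}"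
    "((\<lambda>\<tau>. T s \<tau> o\<^sub>L Q \<tau> o\<^sub>L B \<tau> o\<^sub>L U \<tau> s) has_integral I2) {s..}" "U s s = (T s s o\<^sub>L P s) + I1 - I2"
    using U_eq[of s s] by blast
  moreover have "I1 = 0"
    using I(1) by (simp add: has_integral_refl(1)[THEN has_integral_unique])
  ultimately show ?thesis
    by auto
qed

lemma P_compose_U_diag: "P s o\<^sub>L U s s = P s"
proof -
  obtain I where I: "((\<lambda>\<tau>. T s \<tau> o\<^sub>L Q \<tau> o\<^sub>L B \<tau> o\<^sub>L U \<tau> s) has_integral I) {s..}" "U s s = P s - I"
    using U_diag by blast
  have "((\<lambda>\<tau>. P s o\<^sub>L (T s \<tau> o\<^sub>L Q \<tau> o\<^sub>L B \<tau> o\<^sub>L U \<tau> s)) has_integral P s o\<^sub>L I) {s..}"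
    by (rule has_integral_blinfun_compose_left[OF I(1)])
  moreover have "(\<lambda>\<tau>. P s o\<^sub>L (T s \<tau> o\<^sub>L Q \<tau> o\<^sub>L B \<tau> o\<^sub>L U \<tau> s)) = (\<lambda>\<tau>. 0)"
    by (simp add: blinfun_compose_assoc projections_commute)
  ultimately have "P s o\<^sub>L I = 0"
    using has_integral_0 has_integral_unique by metis
  then show ?thesis
    using I(2) by (simp add: blinfun_compose_distrib P_proj)
qed

lemma U_compose_U_diag:
  assumes "s \<le> t"
  shows "U t s o\<^sub>L U s s = U t s"
proof -
  have "solves_U_eq s (P s) (\<lambda>t. U t s o\<^sub>L U s s)"
    using solves_U_eq_compose_right[OF U_solves_U_eq, of s "U s s"] by (simp add: P_compose_U_diag)
  from solves_U_eq_unique[OF this U_solves_U_eq in_\<Omega>\<^sub>1_compose_right[OF U_in_\<Omega>\<^sub>1] U_in_\<Omega>\<^sub>1 assms]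
  show ?thesis .
qed

lemma norm_U_diag_minus_P: "norm (U t t - P t) \<le> K * c * K_hat * \<mu> \<bar>t\<bar> powr \<epsilon> * right_tail t"
proof -
  obtain I1 I2 where I: "((\<lambda>\<tau>. T t \<tau> o\<^sub>L P \<tau> o\<^sub>L B \<tau> o\<^sub>L U \<tau> t) has_integral I1) {t..t}"
    "((\<lambda>\<tau>. T t \<tau> o\<^sub>L Q \<tau> o\<^sub>L B \<tau> o\<^sub>L U \<tau> t) has_integral I2) {t..}" "U t t = (T t t o\<^sub>L P t) + I1 - I2"
    using U_eq[of t t] by blast
  have "I1 = 0"
    using I(1) by (simp add: has_integral_refl(1)[THEN has_integral_unique])
  then have "norm (U t t - P t) = norm I2"
    using I(3) by simp
  also have "\<dots> \<le> K * c * K_hat * weight t t * right_tail t"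
    using norm_Q_integral_le[OF norm_U_le order_refl I(2)] by simp
  finally show ?thesis
    by (simp add: weight_diag)
qed

lemma U_minus_That_U_volterra:
  assumes "s \<le> t"
  shows "((\<lambda>\<sigma>. T t \<sigma> o\<^sub>L B \<sigma> o\<^sub>L (U \<sigma> s - (That \<sigma> s o\<^sub>L U s s))) has_integral
    U t s - (That t s o\<^sub>L U s s)) {s..t}"
proof -
  obtain I where I: "((\<lambda>\<sigma>. T s \<sigma> o\<^sub>L Q \<sigma> o\<^sub>L B \<sigma> o\<^sub>L U \<sigma> s) has_integral I) {s..}" "U s s = P s - I"
    using U_diag by blast
  obtain I1 I2 where I12: "((\<lambda>\<sigma>. T t \<sigma> o\<^sub>L P \<sigma> o\<^sub>L B \<sigma> o\<^sub>L U \<sigma> s) has_integral I1) {s..t}"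
    "((\<lambda>\<sigma>. T t \<sigma> o\<^sub>L Q \<sigma> o\<^sub>L B \<sigma> o\<^sub>L U \<sigma> s) has_integral I2) {t..}" "U t s = (T t s o\<^sub>L P s) + I1 - I2"
    using U_eq[OF assms] by blast
  have "((\<lambda>\<sigma>. T t \<sigma> o\<^sub>L Q \<sigma> o\<^sub>L B \<sigma> o\<^sub>L U \<sigma> s) has_integral T t s o\<^sub>L I) {s..}"
    using has_integral_blinfun_compose_left[OF I(1), of "T t s"]
    by (simp add: blinfun_compose_assoc T_cocycle_assoc)
  from has_integral_add[OF I12(1) has_integral_atLeast_diff[OF this I12(2) assms]]
  have "((\<lambda>\<sigma>. T t \<sigma> o\<^sub>L B \<sigma> o\<^sub>L U \<sigma> s) has_integral I1 + ((T t s o\<^sub>L I) - I2)) {s..t}"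
    by (simp add: split_integrand[symmetric])
  moreover have "((\<lambda>\<sigma>. T t \<sigma> o\<^sub>L B \<sigma> o\<^sub>L That \<sigma> s o\<^sub>L U s s) has_integral
      (That t s - T t s) o\<^sub>L U s s) {s..t}"
    using has_integral_blinfun_compose_right[OF T_That_variation[OF assms, of t s], of "U s s"]
    by simp
  ultimately have "((\<lambda>\<sigma>. (T t \<sigma> o\<^sub>L B \<sigma> o\<^sub>L U \<sigma> s) - (T t \<sigma> o\<^sub>L B \<sigma> o\<^sub>L That \<sigma> s o\<^sub>L U s s))
      has_integral (I1 + ((T t s o\<^sub>L I) - I2)) - ((That t s - T t s) o\<^sub>L U s s)) {s..t}"
    by (rule has_integral_diff)
  moreover have "(\<lambda>\<sigma>. (T t \<sigma> o\<^sub>L B \<sigma> o\<^sub>L U \<sigma> s) - (T t \<sigma> o\<^sub>L B \<sigma> o\<^sub>L That \<sigma> s o\<^sub>L U s s))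
      = (\<lambda>\<sigma>. T t \<sigma> o\<^sub>L B \<sigma> o\<^sub>L (U \<sigma> s - (That \<sigma> s o\<^sub>L U s s)))"
    by (simp add: blinfun_compose_distrib blinfun_compose_assoc)
  moreover have "(I1 + ((T t s o\<^sub>L I) - I2)) - ((That t s - T t s) o\<^sub>L U s s) = U t s - (That t s o\<^sub>L U s s)"
    unfolding I12(3) I(2) by (simp add: blinfun_compose_distrib algebra_simps)
  ultimately show ?thesis
    by simp
qed

lemma U_eq_That_U:
  assumes "s \<le> t"
  shows "U t s = That t s o\<^sub>L U s s"
proof -
  have cont: "continuous_on {s..t} (\<lambda>\<tau>. U \<tau> s - (That \<tau> s o\<^sub>L U s s))"
    by (intro continuous_on_diff bounded_bilinear.continuous_on[OF bounded_bilinear_blinfun_compose]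
        continuous_on_const evolution_operator_continuous_on[OF That_evol]
        continuous_on_subset[OF U_cont[of s]]) auto
  have "(\<lambda>\<tau>. U \<tau> s - (That \<tau> s o\<^sub>L U s s)) t = 0"
    by (rule volterra_zero[where B = B, OF T_evol generators_bounded(1) norm_B_le_c _ cont assms])
      (auto intro: U_minus_That_U_volterra)
  then show ?thesis
    by simp
qed

lemma solves_U_eq_Q_part_bounded:
  assumes M: "\<And>t. s \<le> t \<Longrightarrow> norm (Z t) \<le> M * weight s t" and Z: "solves_U_eq s Y Z" and "s \<le> t"
  shows "norm (T t s o\<^sub>L (Q s o\<^sub>L Y)) \<le> (M + \<theta> * M + K * norm Y) * \<mu> \<bar>s\<bar> powr \<epsilon>"
proof -
  have "0 \<le> M"
    by (rule weight_bound_nonneg[OF M])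
  obtain I1 I2 where I: "((\<lambda>\<tau>. T t \<tau> o\<^sub>L P \<tau> o\<^sub>L B \<tau> o\<^sub>L Z \<tau>) has_integral I1) {s..t}"
    "((\<lambda>\<tau>. T t \<tau> o\<^sub>L Q \<tau> o\<^sub>L B \<tau> o\<^sub>L Z \<tau>) has_integral I2) {t..}" "Z t = (T t s o\<^sub>L Y) + I1 - I2"
    using Z \<open>s \<le> t\<close> unfolding solves_U_eq_def by blast
  have "T t s o\<^sub>L (Q s o\<^sub>L Y) = Z t - (I1 - I2) - (T t s o\<^sub>L P s o\<^sub>L Y)"
    using I(3) by (simp add: blinfun_compose_distrib blinfun_compose_assoc)
  then have "norm (T t s o\<^sub>L (Q s o\<^sub>L Y)) \<le> norm (Z t) + norm (I1 - I2) + norm (T t s o\<^sub>L P s) * norm Y"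
    by (smt (verit) norm_blinfun_compose norm_triangle_ineq4)
  also have "\<dots> \<le> M * weight s t + \<theta> * M * weight s t + K * weight s t * norm Y"
    using M[OF \<open>s \<le> t\<close>] norm_integral_terms_le[OF M \<open>s \<le> t\<close> I(1,2)] norm_TP_le[OF \<open>s \<le> t\<close>]
    by (intro add_mono mult_right_mono) auto
  also have "\<dots> = (M + \<theta> * M + K * norm Y) * weight s t"
    by (simp add: algebra_simps)
  also have "\<dots> \<le> (M + \<theta> * M + K * norm Y) * \<mu> \<bar>s\<bar> powr \<epsilon>"
    using weight_le_diag[OF \<open>s \<le> t\<close>] \<open>0 \<le> M\<close> \<theta>_pos by (intro mult_left_mono) auto
  finally show ?thesis .
qed

text \<open>The \<open>Q s\<close>-component of the initial value of a solution in \<open>\<Omega>\<^sub>1\<close> stays bounded under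
  \<open>T t s\<close>, while pulling it back with \<open>T s t o\<^sub>L Q t\<close>, whose norm tends to \<open>0\<close> by \<open>lim_k\<close>, must recover it.\<close>

lemma solves_U_eq_Q_vanishes:
  assumes Z: "in_\<Omega>\<^sub>1 s Z" "solves_U_eq s Y Z"
  shows "Q s o\<^sub>L Y = 0"
proof -
  obtain M where M: "\<And>t. s \<le> t \<Longrightarrow> norm (Z t) \<le> M * weight s t"
    using Z(1) unfolding in_\<Omega>\<^sub>1_def by auto
  define C where "C = (M + \<theta> * M + K * norm Y) * \<mu> \<bar>s\<bar> powr \<epsilon>"
  have decay: "norm (Q s o\<^sub>L Y) \<le> K * C * k s powr b * (k t powr (-b) * \<nu> \<bar>t\<bar> powr \<epsilon>)" if "s \<le> t" for t
  proof -
    have "Q s o\<^sub>L Y = (T s t o\<^sub>L Q t) o\<^sub>L (T t s o\<^sub>L (Q s o\<^sub>L Y))"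
      by (simp add: blinfun_compose_assoc projections_commute T_cocycle_assoc)
    then have "norm (Q s o\<^sub>L Y) \<le> norm (T s t o\<^sub>L Q t) * norm (T t s o\<^sub>L (Q s o\<^sub>L Y))"
      by (metis norm_blinfun_compose)
    also have "\<dots> \<le> (K * (k t / k s) powr (-b) * \<nu> \<bar>t\<bar> powr \<epsilon>) * C"
      using dich_Q[OF that] solves_U_eq_Q_part_bounded[OF M Z(2) that] by (intro mult_mono) (auto simp: C_def)
    also have "(k t / k s) powr (-b) = k t powr (-b) * k s powr b"
      by (simp add: powr_divide powr_minus_divide field_simps)
    finally show ?thesis
      by (simp add: mult_ac)
  qed
  have "norm (Q s o\<^sub>L Y) \<le> 0"
  proof (rule tendsto_le[OF trivial_limit_at_top_linorder])
    show "((\<lambda>t. K * C * k s powr b * (k t powr (-b) * \<nu> \<bar>t\<bar> powr \<epsilon>)) \<longlongrightarrow> 0) at_top"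
      using tendsto_mult_left[OF lim_k, of "K * C * k s powr b"] by simp
    show "\<forall>\<^sub>F t in at_top. norm (Q s o\<^sub>L Y) \<le> K * C * k s powr b * (k t powr (-b) * \<nu> \<bar>t\<bar> powr \<epsilon>)"
      using decay eventually_at_top_linorder by blast
  qed simp
  then show ?thesis
    by simp
qed

lemma in_\<Omega>\<^sub>1_solution_eq_U:
  assumes "in_\<Omega>\<^sub>1 s Z" "solves_U_eq s Y Z" "s \<le> t"
  shows "Z t = U t s o\<^sub>L Y"
proof -
  have "P s o\<^sub>L Y = Y"
    using solves_U_eq_Q_vanishes[OF assms(1,2)] by (simp add: blinfun_compose_distrib)
  then have "solves_U_eq s Y (\<lambda>t. U t s o\<^sub>L Y)"
    using solves_U_eq_compose_right[OF U_solves_U_eq, of s Y] by simp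
  from solves_U_eq_unique[OF assms(2) this assms(1) in_\<Omega>\<^sub>1_compose_right[OF U_in_\<Omega>\<^sub>1] assms(3)]
  show ?thesis .
qed

lemma That_solves_U_eq:
  assumes R: "((\<lambda>\<tau>. T s \<tau> o\<^sub>L Q \<tau> o\<^sub>L B \<tau> o\<^sub>L (That \<tau> s o\<^sub>L W)) has_integral R) {s..}"
  shows "solves_U_eq s (W + R) (\<lambda>\<tau>. That \<tau> s o\<^sub>L W)"
  unfolding solves_U_eq_def
proof (intro allI impI)
  fix t assume "s \<le> t"
  define \<Phi> where "\<Phi> = ((T s t o\<^sub>L That t s) - id_blinfun) o\<^sub>L W"
  have variation: "((\<lambda>\<tau>. T s \<tau> o\<^sub>L B \<tau> o\<^sub>L That \<tau> s o\<^sub>L W) has_integral \<Phi>) {s..t}"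
    using has_integral_blinfun_compose_right[OF T_That_variation[OF \<open>s \<le> t\<close>, of s s], of W]
    by (simp add: \<Phi>_def)
  have P_part: "((\<lambda>\<tau>. T t \<tau> o\<^sub>L P \<tau> o\<^sub>L B \<tau> o\<^sub>L (That \<tau> s o\<^sub>L W)) has_integral T t s o\<^sub>L P s o\<^sub>L \<Phi>) {s..t}"
    using has_integral_blinfun_compose_left[OF variation, of "T t s o\<^sub>L P s"]
    by (simp add: blinfun_compose_assoc projections_commute T_cocycle_assoc)
  have Q_part: "((\<lambda>\<tau>. T t \<tau> o\<^sub>L Q \<tau> o\<^sub>L B \<tau> o\<^sub>L (That \<tau> s o\<^sub>L W)) has_integral T t s o\<^sub>L Q s o\<^sub>L \<Phi>) {s..t}"
    using has_integral_blinfun_compose_left[OF variation, of "T t s o\<^sub>L Q s"]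
    by (simp add: blinfun_compose_assoc projections_commute T_cocycle_assoc)
  have "((\<lambda>\<tau>. T t \<tau> o\<^sub>L Q \<tau> o\<^sub>L B \<tau> o\<^sub>L (That \<tau> s o\<^sub>L W)) has_integral T t s o\<^sub>L R) {s..}"
    using has_integral_blinfun_compose_left[OF R, of "T t s"] by (simp add: blinfun_compose_assoc T_cocycle_assoc)
  from has_integral_atLeast_tail[OF this Q_part \<open>s \<le> t\<close>]
  have Q_tail: "((\<lambda>\<tau>. T t \<tau> o\<^sub>L Q \<tau> o\<^sub>L B \<tau> o\<^sub>L (That \<tau> s o\<^sub>L W)) has_integral
      (T t s o\<^sub>L R) - (T t s o\<^sub>L Q s o\<^sub>L \<Phi>)) {t..}" .
  have "That t s o\<^sub>L W = (T t s o\<^sub>L (W + R)) + (T t s o\<^sub>L P s o\<^sub>L \<Phi>) - ((T t s o\<^sub>L R) - (T t s o\<^sub>L Q s o\<^sub>L \<Phi>))"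
    unfolding \<Phi>_def by (simp add: blinfun_compose_distrib blinfun_compose_assoc T_cocycle_assoc)
  with P_part Q_tail
  show "\<exists>I1 I2. ((\<lambda>\<tau>. T t \<tau> o\<^sub>L P \<tau> o\<^sub>L B \<tau> o\<^sub>L (That \<tau> s o\<^sub>L W)) has_integral I1) {s..t} \<and>
      ((\<lambda>\<tau>. T t \<tau> o\<^sub>L Q \<tau> o\<^sub>L B \<tau> o\<^sub>L (That \<tau> s o\<^sub>L W)) has_integral I2) {t..} \<and>
      That t s o\<^sub>L W = (T t s o\<^sub>L (W + R)) + I1 - I2"
    by blast
qed

lemma U_diag_fixes:
  assumes "in_\<Omega>\<^sub>1 s (\<lambda>\<tau>. That \<tau> s o\<^sub>L W)"
    and "((\<lambda>\<tau>. T s \<tau> o\<^sub>L Q \<tau> o\<^sub>L B \<tau> o\<^sub>L (That \<tau> s o\<^sub>L W)) has_integral R) {s..}"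
  shows "U s s o\<^sub>L W = W"
proof -
  have W: "W = U s s o\<^sub>L (W + R)"
    using in_\<Omega>\<^sub>1_solution_eq_U[OF assms(1) That_solves_U_eq[OF assms(2)] order_refl] by simp
  then have "U s s o\<^sub>L W = (U s s o\<^sub>L U s s) o\<^sub>L (W + R)"
    by (metis blinfun_compose_assoc)
  also have "\<dots> = W"
    using U_compose_U_diag[of s s] W by simp
  finally show ?thesis .
qed

lemma That_U_diag_in_\<Omega>\<^sub>1: "in_\<Omega>\<^sub>1 s (\<lambda>\<tau>. That \<tau> r o\<^sub>L U r r)"
proof -
  define m where "m = max s r"
  have "continuous_on {s..m} (\<lambda>\<tau>. That \<tau> r o\<^sub>L U r r)"
    by (intro bounded_bilinear.continuous_on[OF bounded_bilinear_blinfun_compose]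
        evolution_operator_continuous_on[OF That_evol] continuous_on_const)
  then obtain C where C: "\<forall>\<tau>\<in>{s..m}. norm (That \<tau> r o\<^sub>L U r r) \<le> C"
    using compact_imp_bounded[OF compact_continuous_image] by (fastforce simp: bounded_iff)
  define M1 where "M1 = max 0 C / weight s m"
  define M2 where "M2 = K_hat * weight r s / \<mu> \<bar>s\<bar> powr \<epsilon>"
  have "norm (That \<tau> r o\<^sub>L U r r) \<le> max M1 M2 * weight s \<tau>" if "s \<le> \<tau>" for \<tau>
  proof (cases "\<tau> \<le> m")
    case True
    have "norm (That \<tau> r o\<^sub>L U r r) \<le> M1 * weight s m"
      using C that True weight_pos[of s m] by (force simp: M1_def)
    also have "\<dots> \<le> M1 * weight s \<tau>"
      using weight_antimono[OF True] by (intro mult_left_mono) (auto simp: M1_def)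
    finally show ?thesis
      by (meson max.cobounded1 mult_right_mono order_trans weight_nonneg)
  next
    case False
    then have "r \<le> \<tau>"
      by (simp add: m_def)
    then have "norm (That \<tau> r o\<^sub>L U r r) \<le> K_hat * weight r \<tau>"
      using norm_U_le U_eq_That_U by metis
    also have "\<dots> = M2 * weight s \<tau>"
      by (simp add: M2_def weight_trans[of r \<tau> s])
    finally show ?thesis
      by (meson max.cobounded2 mult_right_mono order_trans weight_nonneg)
  qed
  then show ?thesis
    unfolding in_\<Omega>\<^sub>1_def by blast
qed

lemma That_U_diag_Q_integrable: "(\<lambda>\<tau>. T s \<tau> o\<^sub>L Q \<tau> o\<^sub>L B \<tau> o\<^sub>L (That \<tau> r o\<^sub>L U r r)) integrable_on {s..}"
proof (cases "r \<le> s")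
  case True
  obtain I1 I2 where "((\<lambda>\<tau>. T s \<tau> o\<^sub>L Q \<tau> o\<^sub>L B \<tau> o\<^sub>L U \<tau> r) has_integral I2) {s..}"
    using U_eq[OF True] by blast
  then have "((\<lambda>\<tau>. T s \<tau> o\<^sub>L Q \<tau> o\<^sub>L B \<tau> o\<^sub>L (That \<tau> r o\<^sub>L U r r)) has_integral I2) {s..}"
  proof (rule has_integral_cong[THEN iffD1, rotated])
    fix \<tau> :: real
    assume "\<tau> \<in> {s..}"
    then have "U \<tau> r = That \<tau> r o\<^sub>L U r r"
      using True by (intro U_eq_That_U) auto
    then show "T s \<tau> o\<^sub>L Q \<tau> o\<^sub>L B \<tau> o\<^sub>L U \<tau> r = T s \<tau> o\<^sub>L Q \<tau> o\<^sub>L B \<tau> o\<^sub>L (That \<tau> r o\<^sub>L U r r)"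
      by simp
  qed
  then show ?thesis
    by (auto simp: integrable_on_def)
next
  case False
  obtain I where I: "((\<lambda>\<tau>. T r \<tau> o\<^sub>L Q \<tau> o\<^sub>L B \<tau> o\<^sub>L U \<tau> r) has_integral I) {r..}"
    using U_diag by blast
  have "((\<lambda>\<tau>. T s r o\<^sub>L (T r \<tau> o\<^sub>L Q \<tau> o\<^sub>L B \<tau> o\<^sub>L U \<tau> r)) has_integral T s r o\<^sub>L I) {r..}"
    by (rule has_integral_blinfun_compose_left[OF I])
  then have far: "((\<lambda>\<tau>. T s \<tau> o\<^sub>L Q \<tau> o\<^sub>L B \<tau> o\<^sub>L (That \<tau> r o\<^sub>L U r r)) has_integral T s r o\<^sub>L I) {r..}"
  proof (rule has_integral_cong[THEN iffD1, rotated])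
    fix \<tau> :: real
    assume "\<tau> \<in> {r..}"
    then have "U \<tau> r = That \<tau> r o\<^sub>L U r r"
      by (intro U_eq_That_U) auto
    then show "T s r o\<^sub>L (T r \<tau> o\<^sub>L Q \<tau> o\<^sub>L B \<tau> o\<^sub>L U \<tau> r)
        = T s \<tau> o\<^sub>L Q \<tau> o\<^sub>L B \<tau> o\<^sub>L (That \<tau> r o\<^sub>L U r r)"
      by (simp add: blinfun_compose_assoc T_cocycle_assoc)
  qed
  have "((\<lambda>\<tau>. (T s r o\<^sub>L Q r) o\<^sub>L ((T r \<tau> o\<^sub>L B \<tau> o\<^sub>L That \<tau> r) o\<^sub>L U r r)) has_integral
      (T s r o\<^sub>L Q r) o\<^sub>L (((T r r o\<^sub>L That r r) - (T r s o\<^sub>L That s r)) o\<^sub>L U r r)) {s..r}"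
    using False
    by (intro has_integral_blinfun_compose_left has_integral_blinfun_compose_right[OF T_That_variation]) simp
  then have near: "((\<lambda>\<tau>. T s \<tau> o\<^sub>L Q \<tau> o\<^sub>L B \<tau> o\<^sub>L (That \<tau> r o\<^sub>L U r r)) has_integral
      (T s r o\<^sub>L Q r) o\<^sub>L (((T r r o\<^sub>L That r r) - (T r s o\<^sub>L That s r)) o\<^sub>L U r r)) {s..r}"
    by (simp add: blinfun_compose_assoc projections_commute T_cocycle_assoc)
  show ?thesis
    using has_integral_atLeast_Un[OF near far] False by (auto simp: integrable_on_def)
qed

lemma U_diag_fixes_That_U: "U s s o\<^sub>L (That s r o\<^sub>L U r r) = That s r o\<^sub>L U r r"
proof -
  obtain R where "((\<lambda>\<tau>. T s \<tau> o\<^sub>L Q \<tau> o\<^sub>L B \<tau> o\<^sub>L (That \<tau> s o\<^sub>L (That s r o\<^sub>L U r r))) has_integral R) {s..}"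
    using That_U_diag_Q_integrable[of s r] by (auto simp: integrable_on_def That_cocycle_assoc)
  moreover have "in_\<Omega>\<^sub>1 s (\<lambda>\<tau>. That \<tau> s o\<^sub>L (That s r o\<^sub>L U r r))"
    using That_U_diag_in_\<Omega>\<^sub>1[of s r] by (simp add: That_cocycle_assoc)
  ultimately show ?thesis
    by (intro U_diag_fixes)
qed

end

section \<open>Time reversal and the perturbed projections\<close>

locale dichotomy_perturbation_pair = dichotomy_perturbation +
  fixes V
  assumes lim_h: "((\<lambda>t. h t powr (-a) * \<mu> \<bar>t\<bar> powr \<epsilon>) \<longlongrightarrow> 0) at_bot"
    and V_cont: "\<And>s. continuous_on {..s} (\<lambda>t. V t s)"
    and V_Omega2: "\<And>s. \<exists>M. \<forall>t\<le>s. norm (V t s) * (k s / k t) powr b * \<nu> \<bar>s\<bar> powr (-\<epsilon>) \<le> M"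
    and V_eq: "\<And>t s. t \<le> s \<Longrightarrow> \<exists>I1 I2.
        ((\<lambda>\<tau>. T t \<tau> o\<^sub>L P \<tau> o\<^sub>L B \<tau> o\<^sub>L V \<tau> s) has_integral I1) {..t} \<and>
        ((\<lambda>\<tau>. T t \<tau> o\<^sub>L (id_blinfun - P \<tau>) o\<^sub>L B \<tau> o\<^sub>L V \<tau> s) has_integral I2) {t..s} \<and>
        V t s = (T t s o\<^sub>L (id_blinfun - P s)) + I1 - I2"

context dichotomy_perturbation_pair
begin

lemma V_reversed_in_\<Omega>\<^sub>1:
  "\<exists>M. \<forall>t\<ge>s. norm (V (- t) (- s)) * (inverse (k (- t)) / inverse (k (- s))) powr - (- b)
      * \<nu> \<bar>s\<bar> powr - \<epsilon> \<le> M"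
proof -
  obtain M where M: "\<And>t'. t' \<le> - s \<Longrightarrow> norm (V t' (- s)) * (k (- s) / k t') powr b * \<nu> \<bar>s\<bar> powr (-\<epsilon>) \<le> M"
    using V_Omega2[of "- s"] by auto
  have "norm (V (- t) (- s)) * (inverse (k (- t)) / inverse (k (- s))) powr - (- b) * \<nu> \<bar>s\<bar> powr - \<epsilon> \<le> M"
    if "s \<le> t" for t
    using M[of "- t"] that by (simp add: divide_inverse mult.commute)
  then show ?thesis
    by blast
qed

lemma V_reversed_eq:
  assumes "s \<le> t"
  shows "\<exists>I1 I2.
      ((\<lambda>\<tau>. T (- t) (- \<tau>) o\<^sub>L (id_blinfun - P (- \<tau>)) o\<^sub>L - B (- \<tau>) o\<^sub>L V (- \<tau>) (- s)) has_integral I1) {s..t} \<and>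
      ((\<lambda>\<tau>. T (- t) (- \<tau>) o\<^sub>L (id_blinfun - (id_blinfun - P (- \<tau>))) o\<^sub>L - B (- \<tau>) o\<^sub>L V (- \<tau>) (- s))
        has_integral I2) {t..} \<and>
      V (- t) (- s) = (T (- t) (- s) o\<^sub>L (id_blinfun - P (- s))) + I1 - I2"
proof -
  obtain J1 J2 where J1: "((\<lambda>\<tau>. T (- t) \<tau> o\<^sub>L P \<tau> o\<^sub>L B \<tau> o\<^sub>L V \<tau> (- s)) has_integral J1) {..- t}"
    and J2: "((\<lambda>\<tau>. T (- t) \<tau> o\<^sub>L (id_blinfun - P \<tau>) o\<^sub>L B \<tau> o\<^sub>L V \<tau> (- s)) has_integral J2) {- t..- s}"
    and V: "V (- t) (- s) = (T (- t) (- s) o\<^sub>L (id_blinfun - P (- s))) + J1 - J2"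
    using V_eq[of "- t" "- s"] assms by auto
  have "((\<lambda>\<tau>. T (- t) (- \<tau>) o\<^sub>L (id_blinfun - P (- \<tau>)) o\<^sub>L - B (- \<tau>) o\<^sub>L V (- \<tau>) (- s)) has_integral - J2) {s..t}"
    using has_integral_neg[OF has_integral_reflect_image[THEN iffD2, OF J2]]
    by (simp add: blinfun_compose_distrib)
  moreover have "((\<lambda>\<tau>. T (- t) (- \<tau>) o\<^sub>L (id_blinfun - (id_blinfun - P (- \<tau>))) o\<^sub>L - B (- \<tau>) o\<^sub>L V (- \<tau>) (- s))
      has_integral - J1) {t..}"
    using has_integral_neg[OF has_integral_reflect_image[THEN iffD2, OF J1]]
    by (simp add: blinfun_compose_distrib)
  ultimately show ?thesis
    using V by (intro exI[of _ "- J2"] exI[of _ "- J1"]) simp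
qed

end

text \<open>Reversing time, \<open>t \<mapsto> -t\<close>, exchanges the roles of \<open>P\<close> and \<open>Q\<close>, of \<open>(h, \<mu>, a)\<close> and
  \<open>(1 / k (- t), \<nu>, -b)\<close>, and of the two integral equations, so that \<open>V\<close> becomes the \<open>U\<close> of the
  reversed system; all properties of \<open>V\<close> are inherited from those of \<open>U\<close>.\<close>

sublocale dichotomy_perturbation_pair \<subseteq> reversed: dichotomy_perturbation
  "\<lambda>t. - A (- t)" "\<lambda>t s. T (- t) (- s)" "\<lambda>t. id_blinfun - P (- t)"
  "\<lambda>t. inverse (k (- t))" "\<lambda>t. inverse (h (- t))" \<nu> \<mu> "- b" "- a" \<epsilon> K c \<omega> N
  "\<lambda>t. - B (- t)" "\<lambda>t s. V (- t) (- s)" "\<lambda>t s. That (- t) (- s)"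
proof unfold_locales
  have "continuous_on UNIV (\<lambda>t. A (- t))"
    by (rule continuous_on_compose2[OF A_cont, where f = uminus]) (auto intro: continuous_intros)
  then show "continuous_on UNIV (\<lambda>t. - A (- t))"
    by (rule continuous_on_minus)
  show "evolution_operator (\<lambda>t. - A (- t)) (\<lambda>t s. T (- t) (- s))"
    by (rule evolution_operator_reflect[OF T_evol])
  show "growth_rate (\<lambda>t. inverse (k (- t)))" "growth_rate (\<lambda>t. inverse (h (- t)))"
    using growth_rates by (auto intro: growth_rate_reflect)
  show "growth_rate \<nu>" "growth_rate \<mu>"
    using growth_rates by auto
  show "(id_blinfun - P (- t)) o\<^sub>L (id_blinfun - P (- t)) = id_blinfun - P (- t)" for t
    by simp
  show "(id_blinfun - P (- t)) o\<^sub>L T (- t) (- s) = T (- t) (- s) o\<^sub>L (id_blinfun - P (- s))" for t s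
    by (simp add: blinfun_compose_distrib P_inv)
  show "- b \<le> 0" "0 \<le> - a"
    using a_nonpos b_nonneg by auto
  show "norm (T (- t) (- s) o\<^sub>L (id_blinfun - P (- s)))
      \<le> K * (inverse (k (- t)) / inverse (k (- s))) powr (- b) * \<nu> \<bar>s\<bar> powr \<epsilon>" if "s \<le> t" for t s
    using dich_Q[of "- t" "- s"] that by (simp add: divide_inverse mult.commute)
  show "norm (T (- t) (- s) o\<^sub>L (id_blinfun - (id_blinfun - P (- s))))
      \<le> K * (inverse (h (- s)) / inverse (h (- t))) powr (- (- a)) * \<mu> \<bar>s\<bar> powr \<epsilon>" if "t \<le> s" for t s
    using dich_P[of "- s" "- t"] that by (simp add: divide_inverse mult.commute)
  show "((\<lambda>t. inverse (h (- t)) powr (- (- a)) * \<mu> \<bar>t\<bar> powr \<epsilon>) \<longlongrightarrow> 0) at_top"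
    using lim_h unfolding filterlim_at_top_mirror by (simp add: inverse_powr powr_minus)
  show "norm (- B (- t)) \<le> c * min (\<nu> \<bar>t\<bar> powr (- \<omega> - \<epsilon>)) (\<mu> \<bar>t\<bar> powr (- \<omega> - \<epsilon>))" for t
    using B_bound[of "- t"] by (simp add: min.commute)
  show "(\<lambda>\<tau>. \<nu> \<bar>\<tau>\<bar> powr - \<omega>) integrable_on {..t}" for t
    using integral_reflect_abs(1)[OF \<nu>_integrable[of "- t"]] by simp
  show "(\<lambda>\<tau>. \<mu> \<bar>\<tau>\<bar> powr - \<omega>) integrable_on {t..}" for t
    using integral_reflect_abs(1)[OF \<mu>_integrable[of "- t"]] by simp
  show "\<mu> \<bar>t\<bar> powr \<epsilon> * integral {..t} (\<lambda>\<tau>. \<nu> \<bar>\<tau>\<bar> powr - \<omega>)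
      + \<nu> \<bar>t\<bar> powr \<epsilon> * integral {t..} (\<lambda>\<tau>. \<mu> \<bar>\<tau>\<bar> powr - \<omega>) \<le> N" for t
    using N_bound[of "- t"] integral_reflect_abs(2)[OF \<nu>_integrable[of "- t"]]
      integral_reflect_abs(2)[OF \<mu>_integrable[of "- t"]]
    by (simp add: add.commute)
  show "continuous_on {s..} (\<lambda>t. V (- t) (- s))" for s
    using continuous_on_compose2[where f = uminus and g = "\<lambda>t. V t (- s)", OF V_cont[of "- s"]
        continuous_on_minus[OF continuous_on_id]] by auto
  show "evolution_operator (\<lambda>t. - A (- t) + - B (- t)) (\<lambda>t s. That (- t) (- s))"
    using evolution_operator_reflect[OF That_evol] by (simp add: add.commute)
qed (use K_pos c_pos \<omega>_pos \<epsilon>_nonneg c_small V_reversed_in_\<Omega>\<^sub>1 V_reversed_eq in auto)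

lemma self_bounded_le:
  fixes n m m' K q :: real
  assumes "n \<le> K * m + q + n * q" "0 \<le> q" "2 * q < 1" "q \<le> K" "1 \<le> m'" "0 \<le> n"
  shows "n \<le> K / (1 - 2 * q) * (m + m')"
proof -
  have "n * (1 - 2 * q) \<le> n * (1 - q)"
    using assms by (intro mult_left_mono) auto
  also have "\<dots> \<le> K * m + q"
    using assms(1) by (simp add: algebra_simps)
  also have "\<dots> \<le> K * m + K * m'"
    using assms mult_left_mono[of 1 m' K] by auto
  finally have "n * (1 - 2 * q) \<le> K * (m + m')"
    by (simp add: algebra_simps)
  then show ?thesis
    using assms(3) by (simp add: field_simps)
qed

context dichotomy_perturbation_pair
begin

lemma norm_V_le: "t \<le> s \<Longrightarrow> norm (V t s) \<le> K_hat * (k s / k t) powr (-b) * \<nu> \<bar>s\<bar> powr \<epsilon>"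
  using reversed.norm_U_le[of "- s" "- t"]
  by (simp add: reversed.K_hat_def K_hat_def reversed.weight_def divide_inverse mult_ac)

lemma V_compose_Q: "t \<le> s \<Longrightarrow> V t s o\<^sub>L Q s = V t s"
  using reversed.U_compose_P[of "- s" "- t"] by simp

lemma V_compose_P: "t \<le> s \<Longrightarrow> V t s o\<^sub>L P s = 0"
  using reversed.U_compose_Q[of "- s" "- t"] by simp

lemma V_eq_That_V: "t \<le> s \<Longrightarrow> V t s = That t s o\<^sub>L V s s"
  using reversed.U_eq_That_U[of "- s" "- t"] by simp

lemma V_diag_fixes_That_V: "V s s o\<^sub>L (That s r o\<^sub>L V r r) = That s r o\<^sub>L V r r"
  using reversed.U_diag_fixes_That_U[of "- s" "- r"] by simp

lemma norm_V_diag_minus_Q: "norm (V t t - Q t) \<le> K * c * K_hat * \<nu> \<bar>t\<bar> powr \<epsilon> * left_tail t"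
proof -
  have "reversed.right_tail (- t) = left_tail t"
    unfolding reversed.right_tail_def left_tail_def
    using integral_reflect_abs(2)[OF \<mu>_integrable[of t]] by simp
  then show ?thesis
    using reversed.norm_U_diag_minus_P[of "- t"] by (simp add: reversed.K_hat_def K_hat_def)
qed

definition \<delta> :: real where "\<delta> = K * K_hat * c * N"

lemma \<delta>_eq: "\<delta> = K_hat * \<theta>"
  by (simp add: \<delta>_def \<theta>_def mult_ac)

lemma \<delta>_nonneg: "0 \<le> \<delta>"
  using K_hat_pos \<theta>_pos by (simp add: \<delta>_eq)

lemma \<delta>_small: "2 * \<delta> < 1"
proof -
  have "2 * K * \<theta> < 1 - \<theta>"
    using \<theta>_small by (simp add: algebra_simps)
  then show ?thesis
    unfolding \<delta>_eq K_hat_def \<theta>_def[symmetric] using \<theta>_less_one by (simp add: field_simps)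
qed

lemma \<delta>_le_K: "1/2 \<le> K \<Longrightarrow> \<delta> \<le> K"
proof -
  assume "1/2 \<le> K"
  then have "\<theta> * 2 \<le> \<theta> * (2 * K + 1)"
    using \<theta>_pos by (intro mult_left_mono) auto
  then have "\<theta> / (1 - \<theta>) \<le> 1"
    using \<theta>_small \<theta>_less_one by simp
  then show "\<delta> \<le> K"
    unfolding \<delta>_eq K_hat_def \<theta>_def[symmetric] using K_pos mult_left_mono[of "\<theta> / (1 - \<theta>)" 1 K]
    by simp
qed

lemma K_ge_half:
  assumes "\<exists>v::'a. v \<noteq> 0"
  shows "1/2 \<le> K"
proof -
  obtain v :: 'a where "v \<noteq> 0"
    using assms by blast
  then have "1 \<le> norm (id_blinfun :: 'a \<Rightarrow>\<^sub>L 'a)"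
    using norm_blinfun[of id_blinfun v] by simp
  also have "\<dots> \<le> norm (P 0) + norm (Q 0)"
    using norm_triangle_ineq[of "P 0" "Q 0"] by simp
  also have "\<dots> \<le> K + K"
    using dich_P[of 0 0] dich_Q[of 0 0] growth_rates by (simp add: growth_rate_def)
  finally show ?thesis
    by simp
qed

lemma norm_diag_sum_minus_id: "norm (U t t + V t t - id_blinfun) \<le> \<delta>"
proof -
  have "U t t + V t t - id_blinfun = (U t t - P t) + (V t t - Q t)"
    by simp
  then have "norm (U t t + V t t - id_blinfun) \<le> norm (U t t - P t) + norm (V t t - Q t)"
    by (metis norm_triangle_ineq)
  also have "\<dots> \<le> K * c * K_hat * (\<nu> \<bar>t\<bar> powr \<epsilon> * left_tail t + \<mu> \<bar>t\<bar> powr \<epsilon> * right_tail t)"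
    using norm_U_diag_minus_P[of t] norm_V_diag_minus_Q[of t] by (simp add: algebra_simps)
  also have "\<dots> \<le> K * c * K_hat * N"
    using weighted_tails_le_N K_hat_pos by (intro mult_left_mono) auto
  finally show ?thesis
    by (simp add: \<delta>_def mult_ac)
qed

lemma norm_U_diag_le: "norm (U t t) \<le> K * \<mu> \<bar>t\<bar> powr \<epsilon> + \<delta>"
proof -
  have "\<mu> \<bar>t\<bar> powr \<epsilon> * right_tail t \<le> N"
    using weighted_tails_le_N[of t] tails_nonneg[of t] by (smt (verit) growth_powr_ge_one(2) mult_nonneg_nonneg)
  then have "norm (U t t - P t) \<le> \<delta>"
    using norm_U_diag_minus_P[of t] K_hat_pos mult_left_mono[of _ N "K * c * K_hat"]
    by (fastforce simp: \<delta>_def mult_ac)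
  moreover have "norm (P t) \<le> K * \<mu> \<bar>t\<bar> powr \<epsilon>"
    using dich_P[of t t] by simp
  ultimately show ?thesis
    using norm_triangle_ineq[of "P t" "U t t - P t"] by simp
qed

lemma norm_V_diag_le: "norm (V t t) \<le> K * \<nu> \<bar>t\<bar> powr \<epsilon> + \<delta>"
proof -
  have "\<nu> \<bar>t\<bar> powr \<epsilon> * left_tail t \<le> N"
    using weighted_tails_le_N[of t] tails_nonneg[of t] by (smt (verit) growth_powr_ge_one(1) mult_nonneg_nonneg)
  then have "norm (V t t - Q t) \<le> \<delta>"
    using norm_V_diag_minus_Q[of t] K_hat_pos mult_left_mono[of _ N "K * c * K_hat"]
    by (fastforce simp: \<delta>_def mult_ac)
  moreover have "norm (Q t) \<le> K * \<nu> \<bar>t\<bar> powr \<epsilon>"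
    using dich_Q[of t t] by simp
  ultimately show ?thesis
    using norm_triangle_ineq[of "Q t" "V t t - Q t"] by simp
qed

definition S0 :: "'a \<Rightarrow>\<^sub>L 'a" where "S0 = U 0 0 + V 0 0"

definition S0_inv :: "'a \<Rightarrow>\<^sub>L 'a" where
  "S0_inv = (SOME X. S0 o\<^sub>L X = id_blinfun \<and> X o\<^sub>L S0 = id_blinfun)"

lemma S0_inverse: "S0 o\<^sub>L S0_inv = id_blinfun" "S0_inv o\<^sub>L S0 = id_blinfun"
proof -
  have "norm (id_blinfun - S0) \<le> \<delta>"
    using norm_diag_sum_minus_id[of 0] by (simp add: S0_def norm_minus_commute)
  then have "norm (id_blinfun - S0) < 1"
    using \<delta>_small \<delta>_nonneg by simp
  from blinfun_inverse_of_neumann_series[OF this]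
  have "\<exists>X. S0 o\<^sub>L X = id_blinfun \<and> X o\<^sub>L S0 = id_blinfun"
    by simp
  from someI_ex[OF this] show "S0 o\<^sub>L S0_inv = id_blinfun" "S0_inv o\<^sub>L S0 = id_blinfun"
    by (simp_all add: S0_inv_def)
qed

lemma S0_compose_projections: "S0 o\<^sub>L P 0 = U 0 0" "S0 o\<^sub>L Q 0 = V 0 0"
  using U_compose_P[of 0 0] U_compose_Q[of 0 0] V_compose_P[of 0 0] V_compose_Q[of 0 0]
  by (simp_all add: S0_def blinfun_compose_distrib)

lemma S0_inv_compose: "S0_inv o\<^sub>L U 0 0 = P 0" "S0_inv o\<^sub>L V 0 0 = Q 0"
  by (simp_all add: S0_inverse flip: S0_compose_projections blinfun_compose_assoc)

definition P_hat :: "real \<Rightarrow> 'a \<Rightarrow>\<^sub>L 'a" where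
  "P_hat t = That t 0 o\<^sub>L S0 o\<^sub>L P 0 o\<^sub>L S0_inv o\<^sub>L That 0 t"

definition Q_hat :: "real \<Rightarrow> 'a \<Rightarrow>\<^sub>L 'a" where
  "Q_hat t = That t 0 o\<^sub>L S0 o\<^sub>L Q 0 o\<^sub>L S0_inv o\<^sub>L That 0 t"

lemma P_hat_eq: "P_hat t = That t 0 o\<^sub>L (U 0 0 o\<^sub>L (S0_inv o\<^sub>L That 0 t))"
  and Q_hat_eq: "Q_hat t = That t 0 o\<^sub>L (V 0 0 o\<^sub>L (S0_inv o\<^sub>L That 0 t))"
  by (simp_all add: P_hat_def Q_hat_def blinfun_compose_assoc flip: S0_compose_projections)

lemma P_hat_plus_Q_hat: "P_hat t + Q_hat t = id_blinfun"
proof -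
  have "P_hat t + Q_hat t = That t 0 o\<^sub>L (S0 o\<^sub>L S0_inv) o\<^sub>L That 0 t"
    by (simp add: P_hat_def Q_hat_def blinfun_compose_distrib blinfun_compose_assoc)
  then show ?thesis
    by (simp add: S0_inverse That_cocycle)
qed

lemma P_hat_idem: "P_hat t o\<^sub>L P_hat t = P_hat t"
  by (simp add: P_hat_eq blinfun_compose_assoc That_cocycle_assoc S0_inv_compose U_compose_P
      flip: blinfun_compose_assoc[of "S0_inv" "U 0 0"] blinfun_compose_assoc[of "U 0 0" "P 0"])

lemma Q_hat_idem: "Q_hat t o\<^sub>L Q_hat t = Q_hat t"
  by (simp add: Q_hat_eq blinfun_compose_assoc That_cocycle_assoc S0_inv_compose V_compose_Q
      flip: blinfun_compose_assoc[of "S0_inv" "V 0 0"] blinfun_compose_assoc[of "V 0 0" "Q 0"])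

lemma P_hat_invariant: "P_hat t o\<^sub>L That t s = That t s o\<^sub>L P_hat s"
  by (simp add: P_hat_def blinfun_compose_assoc That_cocycle_assoc That_cocycle)

lemma U_diag_compose_P_hat: "U s s o\<^sub>L P_hat s = P_hat s"
  using U_diag_fixes_That_U[of s 0] by (simp add: P_hat_eq flip: blinfun_compose_assoc)

lemma V_diag_compose_Q_hat: "V s s o\<^sub>L Q_hat s = Q_hat s"
  using V_diag_fixes_That_V[of s 0] by (simp add: Q_hat_eq flip: blinfun_compose_assoc)

lemma norm_That_P_hat_le:
  assumes "s \<le> t"
  shows "norm (That t s o\<^sub>L P_hat s) \<le> K_hat * (h t / h s) powr a * \<mu> \<bar>s\<bar> powr \<epsilon> * norm (P_hat s)"
proof -
  have "That t s o\<^sub>L P_hat s = U t s o\<^sub>L P_hat s"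
    using U_diag_compose_P_hat[of s] U_eq_That_U[OF assms] by (metis blinfun_compose_assoc)
  then have "norm (That t s o\<^sub>L P_hat s) \<le> norm (U t s) * norm (P_hat s)"
    by (metis norm_blinfun_compose)
  also have "\<dots> \<le> K_hat * weight s t * norm (P_hat s)"
    using norm_U_le[OF assms] by (intro mult_right_mono) auto
  finally show ?thesis
    by (simp add: weight_def mult_ac)
qed

lemma norm_That_Q_hat_le:
  assumes "t \<le> s"
  shows "norm (That t s o\<^sub>L Q_hat s) \<le> K_hat * (k s / k t) powr (-b) * \<nu> \<bar>s\<bar> powr \<epsilon> * norm (Q_hat s)"
proof -
  have "That t s o\<^sub>L Q_hat s = V t s o\<^sub>L Q_hat s"
    using V_diag_compose_Q_hat[of s] V_eq_That_V[OF assms] by (metis blinfun_compose_assoc)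
  then have "norm (That t s o\<^sub>L Q_hat s) \<le> norm (V t s) * norm (Q_hat s)"
    by (metis norm_blinfun_compose)
  also have "\<dots> \<le> K_hat * (k s / k t) powr (-b) * \<nu> \<bar>s\<bar> powr \<epsilon> * norm (Q_hat s)"
    using norm_V_le[OF assms] by (intro mult_right_mono) auto
  finally show ?thesis .
qed

lemma P_hat_compose_diag_sum: "P_hat t o\<^sub>L (U t t + V t t) = U t t"
proof -
  define W where "W = That 0 t o\<^sub>L U t t"
  define W' where "W' = That 0 t o\<^sub>L V t t"
  have fix_U: "U 0 0 o\<^sub>L W = W" and fix_V: "V 0 0 o\<^sub>L W' = W'"
    unfolding W_def W'_def by (rule U_diag_fixes_That_U V_diag_fixes_That_V)+
  have "P_hat t o\<^sub>L U t t = That t 0 o\<^sub>L (U 0 0 o\<^sub>L (S0_inv o\<^sub>L (U 0 0 o\<^sub>L W)))"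
    by (simp add: P_hat_eq fix_U blinfun_compose_assoc flip: W_def)
  also have "\<dots> = That t 0 o\<^sub>L ((U 0 0 o\<^sub>L P 0) o\<^sub>L W)"
    by (simp add: S0_inv_compose blinfun_compose_assoc flip: blinfun_compose_assoc[of S0_inv])
  also have "\<dots> = That t 0 o\<^sub>L W"
    by (simp add: U_compose_P fix_U)
  also have "\<dots> = U t t"
    by (simp add: W_def That_cocycle_assoc)
  finally have U_part: "P_hat t o\<^sub>L U t t = U t t" .
  have "P_hat t o\<^sub>L V t t = That t 0 o\<^sub>L (U 0 0 o\<^sub>L (S0_inv o\<^sub>L (V 0 0 o\<^sub>L W')))"
    by (simp add: P_hat_eq fix_V blinfun_compose_assoc flip: W'_def)
  also have "\<dots> = That t 0 o\<^sub>L ((U 0 0 o\<^sub>L Q 0) o\<^sub>L W')"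
    by (simp add: S0_inv_compose blinfun_compose_assoc flip: blinfun_compose_assoc[of S0_inv])
  also have "\<dots> = 0"
    by (simp add: U_compose_Q)
  finally show ?thesis
    using U_part by (simp add: blinfun_compose_distrib)
qed

lemma Q_hat_compose_diag_sum: "Q_hat t o\<^sub>L (U t t + V t t) = V t t"
proof -
  have "Q_hat t = id_blinfun - P_hat t"
    using P_hat_plus_Q_hat[of t] by (simp add: algebra_simps)
  then show ?thesis
    using P_hat_compose_diag_sum[of t] by (simp add: blinfun_compose_distrib(3))
qed

text \<open>Since \<open>U t t + V t t\<close> is within \<open>\<delta>\<close> of the identity, composing with it changes an operator
  \<open>X\<close> by at most \<open>\<delta> \<parallel>X\<parallel>\<close>.\<close>

lemma norm_le_of_compose_diag_sum:
  assumes X: "X o\<^sub>L (U t t + V t t) = W" and W: "norm W \<le> K * m + \<delta>" and "0 \<le> m" "1 \<le> m'"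
  shows "norm X \<le> K / (1 - 2 * \<delta>) * (m + m')"
proof (cases "X = 0")
  case True
  have "0 \<le> K / (1 - 2 * \<delta>) * (m + m')"
    using \<delta>_small K_pos assms(3,4) by (intro mult_nonneg_nonneg divide_nonneg_pos) auto
  then show ?thesis
    using True by simp
next
  case False
  have "\<exists>v::'a. v \<noteq> 0"
  proof (rule ccontr)
    assume "\<not> (\<exists>v::'a. v \<noteq> 0)"
    then have "X = 0"
      by (intro blinfun_eqI) (metis blinfun.zero_right)
    with False show False ..
  qed
  have "X = W - (W - X)"
    by simp
  also have "W - X = X o\<^sub>L (U t t + V t t - id_blinfun)"
    using X by (simp add: blinfun_compose_distrib(4))
  finally have "X = W - (X o\<^sub>L (U t t + V t t - id_blinfun))" .
  then have "norm X \<le> norm W + norm X * norm (U t t + V t t - id_blinfun)"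
    by (metis norm_blinfun_compose norm_triangle_ineq4 add_left_mono order_trans)
  also have "\<dots> \<le> K * m + \<delta> + norm X * \<delta>"
    using W norm_diag_sum_minus_id[of t] by (intro add_mono mult_left_mono) auto
  finally show ?thesis
    using \<delta>_nonneg \<delta>_small \<delta>_le_K[OF K_ge_half[OF \<open>\<exists>v. v \<noteq> 0\<close>]] assms(4)
    by (intro self_bounded_le) auto
qed

lemma norm_P_hat_le: "norm (P_hat t) \<le> K / (1 - 2 * \<delta>) * (\<mu> \<bar>t\<bar> powr \<epsilon> + \<nu> \<bar>t\<bar> powr \<epsilon>)"
  using norm_le_of_compose_diag_sum[OF P_hat_compose_diag_sum norm_U_diag_le] growth_powr_ge_one[of t]
  by simp

lemma norm_Q_hat_le: "norm (Q_hat t) \<le> K / (1 - 2 * \<delta>) * (\<mu> \<bar>t\<bar> powr \<epsilon> + \<nu> \<bar>t\<bar> powr \<epsilon>)"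
  using norm_le_of_compose_diag_sum[OF Q_hat_compose_diag_sum norm_V_diag_le] growth_powr_ge_one[of t]
  by (simp add: add.commute)

end

theorem mainTheorem9:
  fixes A :: "real \<Rightarrow> 'x::banach \<Rightarrow>\<^sub>L 'x"
    and T :: "real \<Rightarrow> real \<Rightarrow> 'x \<Rightarrow>\<^sub>L 'x"
    and P :: "real \<Rightarrow> 'x \<Rightarrow>\<^sub>L 'x"
    and h k \<mu> \<nu> :: "real \<Rightarrow> real"
    and a b \<epsilon> K c \<omega> N :: real
    and Y :: "'y::banach set"
    and B :: "real \<Rightarrow> 'y \<Rightarrow> 'x \<Rightarrow>\<^sub>L 'x"
    and l :: 'y
    and U V :: "real \<Rightarrow> real \<Rightarrow> 'x \<Rightarrow>\<^sub>L 'x"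
    and That :: "real \<Rightarrow> real \<Rightarrow> 'x \<Rightarrow>\<^sub>L 'x"
  assumes Y_open: "open Y"
    and A_cont: "continuous_on UNIV A"
    and T_evol: "evolution_operator A T"
    and gr: "growth_rate h" "growth_rate k" "growth_rate \<mu>" "growth_rate \<nu>"
    and P_proj: "\<And>t. P t o\<^sub>L P t = P t"
    and P_inv: "\<And>t s. P t o\<^sub>L T t s = T t s o\<^sub>L P s"
    and const_ass: "a < 0" "0 \<le> b" "\<epsilon> \<ge> 0" "K > 0"
    and dich_P: "\<And>t s. t \<ge> s \<Longrightarrow>
        norm (T t s o\<^sub>L P s) \<le> K * (h t / h s) powr a * \<mu> \<bar>s\<bar> powr \<epsilon>"
    and dich_Q: "\<And>t s. s \<ge> t \<Longrightarrow>
        norm (T t s o\<^sub>L (id_blinfun - P s)) \<le> K * (k s / k t) powr (-b) * \<nu> \<bar>s\<bar> powr \<epsilon>"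
    and lim_k: "((\<lambda>t. k t powr (-b) * \<nu> \<bar>t\<bar> powr \<epsilon>) \<longlongrightarrow> 0) at_top"
    and lim_h: "((\<lambda>t. h t powr (-a) * \<mu> \<bar>t\<bar> powr \<epsilon>) \<longlongrightarrow> 0) at_bot"
    and c_pos: "c > 0" and \<omega>_pos: "\<omega> > 0"
    and B_bound: "\<And>t y. y \<in> Y \<Longrightarrow>
        norm (B t y) \<le> c * min (\<mu> \<bar>t\<bar> powr (-\<omega>-\<epsilon>)) (\<nu> \<bar>t\<bar> powr (-\<omega>-\<epsilon>))"
    and B_lip: "\<And>t y1 y2. y1 \<in> Y \<Longrightarrow> y2 \<in> Y \<Longrightarrow>
        norm (B t y1 - B t y2) \<le> c * norm (y1 - y2) *
          min (\<mu> \<bar>t\<bar> powr (-\<omega>-\<epsilon>)) (\<nu> \<bar>t\<bar> powr (-\<omega>-\<epsilon>))"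
    and N_int1: "\<And>t. (\<lambda>\<tau>. \<mu> \<bar>\<tau>\<bar> powr (-\<omega>)) integrable_on {..t}"
    and N_int2: "\<And>t. (\<lambda>\<tau>. \<nu> \<bar>\<tau>\<bar> powr (-\<omega>)) integrable_on {t..}"
    and N_bound: "\<And>t. \<nu> \<bar>t\<bar> powr \<epsilon> * integral {..t} (\<lambda>\<tau>. \<mu> \<bar>\<tau>\<bar> powr (-\<omega>))
        + \<mu> \<bar>t\<bar> powr \<epsilon> * integral {t..} (\<lambda>\<tau>. \<nu> \<bar>\<tau>\<bar> powr (-\<omega>)) \<le> N"
    and c_small: "c < 1 / (K * N * (2 * K + 1))"
    and l_Y: "l \<in> Y"
    \<comment> \<open>U = U^l: for each s, the (unique) element of Omega_1 solving the integral equation\<close>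
    and U_cont: "\<And>s. continuous_on {s..} (\<lambda>t. U t s)"
    and U_Omega1: "\<And>s. \<exists>M. \<forall>t\<ge>s.
        norm (U t s) * (h t / h s) powr (-a) * \<mu> \<bar>s\<bar> powr (-\<epsilon>) \<le> M"
    and U_eq: "\<And>t s. t \<ge> s \<Longrightarrow> \<exists>I1 I2.
        ((\<lambda>\<tau>. T t \<tau> o\<^sub>L P \<tau> o\<^sub>L B \<tau> l o\<^sub>L U \<tau> s) has_integral I1) {s..t} \<and>
        ((\<lambda>\<tau>. T t \<tau> o\<^sub>L (id_blinfun - P \<tau>) o\<^sub>L B \<tau> l o\<^sub>L U \<tau> s) has_integral I2) {t..} \<and>
        U t s = (T t s o\<^sub>L P s) + I1 - I2"
    \<comment> \<open>V = V^l: for each s, the (unique) element of Omega_2 solving the integral equation\<close>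
    and V_cont: "\<And>s. continuous_on {..s} (\<lambda>t. V t s)"
    and V_Omega2: "\<And>s. \<exists>M. \<forall>t\<le>s.
        norm (V t s) * (k s / k t) powr b * \<nu> \<bar>s\<bar> powr (-\<epsilon>) \<le> M"
    and V_eq: "\<And>t s. t \<le> s \<Longrightarrow> \<exists>I1 I2.
        ((\<lambda>\<tau>. T t \<tau> o\<^sub>L P \<tau> o\<^sub>L B \<tau> l o\<^sub>L V \<tau> s) has_integral I1) {..t} \<and>
        ((\<lambda>\<tau>. T t \<tau> o\<^sub>L (id_blinfun - P \<tau>) o\<^sub>L B \<tau> l o\<^sub>L V \<tau> s) has_integral I2) {t..s} \<and>
        V t s = (T t s o\<^sub>L (id_blinfun - P s)) + I1 - I2"
    \<comment> \<open>That = evolution operator of x' = (A(t) + B(t,l)) x\<close>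
    and That_evol: "evolution_operator (\<lambda>t. A t + B t l) That"
  shows "\<exists>Sinv.
     (U 0 0 + V 0 0) o\<^sub>L Sinv = id_blinfun \<and> Sinv o\<^sub>L (U 0 0 + V 0 0) = id_blinfun \<and>
     (let S = U 0 0 + V 0 0;
          Ph = (\<lambda>t. That t 0 o\<^sub>L S o\<^sub>L P 0 o\<^sub>L Sinv o\<^sub>L That 0 t);
          Qh = (\<lambda>t. That t 0 o\<^sub>L S o\<^sub>L (id_blinfun - P 0) o\<^sub>L Sinv o\<^sub>L That 0 t);
          Kh = K / (1 - K * c * N)
      in (\<forall>t. Ph t o\<^sub>L Ph t = Ph t \<and> Qh t o\<^sub>L Qh t = Qh t \<and> Ph t + Qh t = id_blinfun) \<and>
         (\<forall>t s. Ph t o\<^sub>L That t s = That t s o\<^sub>L Ph s) \<and>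
         (\<forall>t s. t \<ge> s \<longrightarrow>
            norm (That t s o\<^sub>L Ph s) \<le> Kh * (h t / h s) powr a * \<mu> \<bar>s\<bar> powr \<epsilon> * norm (Ph s)) \<and>
         (\<forall>t s. t \<le> s \<longrightarrow>
            norm (That t s o\<^sub>L Qh s) \<le> Kh * (k s / k t) powr (-b) * \<nu> \<bar>s\<bar> powr \<epsilon> * norm (Qh s)) \<and>
         (\<forall>t. norm (Ph t) \<le> K / (1 - 2 * K * Kh * c * N) * (\<mu> \<bar>t\<bar> powr \<epsilon> + \<nu> \<bar>t\<bar> powr \<epsilon>)) \<and>
         (\<forall>t. norm (Qh t) \<le> K / (1 - 2 * K * Kh * c * N) * (\<mu> \<bar>t\<bar> powr \<epsilon> + \<nu> \<bar>t\<bar> powr \<epsilon>)))"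
proof -
  interpret dichotomy_perturbation_pair A T P h k \<mu> \<nu> a b \<epsilon> K c \<omega> N "\<lambda>t. B t l" U That V
    by unfold_locales (use assms B_bound[OF l_Y] in auto)
  have den: "1 - 2 * K * K_hat * c * N = 1 - 2 * \<delta>"
    by (simp add: \<delta>_def mult_ac)
  show ?thesis
    unfolding Let_def S0_def[symmetric] K_hat_def[symmetric] den
  proof (intro exI[of _ S0_inv], fold P_hat_def Q_hat_def, intro conjI allI impI)
  qed (use S0_inverse P_hat_idem Q_hat_idem P_hat_plus_Q_hat P_hat_invariant
      norm_That_P_hat_le norm_That_Q_hat_le norm_P_hat_le norm_Q_hat_le in auto)
qed

end
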